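(* Let $n\ge 3$. For the Grassmannian ${\rm Gr}(3,n)$, the block diagonal matching field polytope $P_{\mathcal{B}_2}$ can be obtained from $P_{\mathcal{B}_1}$ by a sequence of combinatorial mutations.
   Context: For $k=3$: for each $3$-subset $I=\{i_1<i_2<i_3\}$ of $[n]$ a matching field assigns $\sigma=\Lambda(I)\in S_3$; its polytope $P_\Lambda\subset\mathbb{R}^{3\times n}$ is the convex hull of the vectors $\sum_{r=1}^3 e_{\sigma(r),i_r}$ ($e_{i,j}$ the standard basis matrices). For $0\le\ell\le n$, the block diagonal matching field $\mathcal{B}_\ell$ has $\mathcal{B}_\ell(I)=\mathrm{id}$ if $|I\cap\{1,\dots,\ell\}|\ne1$ and $(12)$ otherwise. Combinatorial mutation: with $N\cong\mathbb{Z}^d$, $M$ its dual, $w\in M$ primitive and $F\subset w^\perp\subset N_\mathbb{R}$ a lattice polytope, the tropical map is $\varphi_{w,F}(u)=u-(\min_{f\in F}\langle f,u\rangle)w$; if $P\subset M_\mathbb{R}$ is a lattice polytope containing the origin and $\varphi_{w,F}(P)$ is convex, it is a combinatorial mutation of $P$. A sequence of combinatorial mutations is a finite chain of polytopes in which consecutive polytopes are related, after identification via lattice-preserving affine isomorphisms (unimodular equivalences) of the lattices they span, either by a unimodular equivalence or by a combinatorial mutation. *)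

theory Defs
  imports Complex_Main
begin

section \<open>Vectors of R^d as functions nat => real supported on {..<d}\<close>

definition vecs :: "nat \<Rightarrow> (nat \<Rightarrow> real) set" where
  "vecs d = {x. \<forall>i\<ge>d. x i = 0}"

definition lattice_vecs :: "nat \<Rightarrow> (nat \<Rightarrow> real) set" where
  "lattice_vecs d = {x \<in> vecs d. \<forall>i. x i \<in> \<int>}"

definition pairing :: "nat \<Rightarrow> (nat \<Rightarrow> real) \<Rightarrow> (nat \<Rightarrow> real) \<Rightarrow> real" where
  "pairing d f u = (\<Sum>i<d. f i * u i)"

definition conv_hull :: "(nat \<Rightarrow> real) set \<Rightarrow> (nat \<Rightarrow> real) set" where
  "conv_hull S = {x. \<exists>T c. finite T \<and> T \<noteq> {} \<and> T \<subseteq> S \<and> (\<forall>t\<in>T. 0 \<le> c t) \<and>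
       sum c T = 1 \<and> x = (\<lambda>i. \<Sum>t\<in>T. c t * t i)}"

definition conv_set :: "(nat \<Rightarrow> real) set \<Rightarrow> bool" where
  "conv_set Q \<longleftrightarrow> (\<forall>x\<in>Q. \<forall>y\<in>Q. \<forall>t::real. 0 \<le> t \<and> t \<le> 1 \<longrightarrow>
       (\<lambda>i. (1 - t) * x i + t * y i) \<in> Q)"

definition int_affine_hull :: "(nat \<Rightarrow> real) set \<Rightarrow> (nat \<Rightarrow> real) set" where
  "int_affine_hull S = {x. \<exists>T c. finite T \<and> T \<subseteq> S \<and> (\<forall>t\<in>T. c t \<in> \<int>) \<and>
       sum c T = 1 \<and> x = (\<lambda>i. \<Sum>t\<in>T. c t * t i)}"

definition lattice_polytope :: "nat \<Rightarrow> (nat \<Rightarrow> real) set \<Rightarrow> bool" where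
  "lattice_polytope d P \<longleftrightarrow>
     (\<exists>V. finite V \<and> V \<noteq> {} \<and> V \<subseteq> lattice_vecs d \<and> P = conv_hull V)"

definition spanned_lattice :: "nat \<Rightarrow> (nat \<Rightarrow> real) set \<Rightarrow> (nat \<Rightarrow> real) set" where
  "spanned_lattice d P = int_affine_hull (P \<inter> lattice_vecs d)"

definition affine_map :: "nat \<Rightarrow> nat \<Rightarrow> ((nat \<Rightarrow> real) \<Rightarrow> (nat \<Rightarrow> real)) \<Rightarrow> bool" where
  "affine_map d e f \<longleftrightarrow> (\<exists>A b. \<forall>x. f x = (\<lambda>j. if j < e then b j + (\<Sum>i<d. A j i * x i) else 0))"

definition unimod_equiv :: "nat \<Rightarrow> (nat \<Rightarrow> real) set \<Rightarrow> nat \<Rightarrow> (nat \<Rightarrow> real) set \<Rightarrow> bool" where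
  "unimod_equiv d P e Q \<longleftrightarrow> lattice_polytope d P \<and> lattice_polytope e Q \<and>
     (\<exists>f. affine_map d e f \<and> bij_betw f (spanned_lattice d P) (spanned_lattice e Q) \<and> f ` P = Q)"

definition primitive_vec :: "nat \<Rightarrow> (nat \<Rightarrow> real) \<Rightarrow> bool" where
  "primitive_vec d w \<longleftrightarrow> w \<in> lattice_vecs d \<and> w \<noteq> (\<lambda>_. 0) \<and>
     (\<forall>k::nat. \<forall>v\<in>lattice_vecs d. w = (\<lambda>i. real k * v i) \<longrightarrow> k = 1)"

definition trop_map :: "nat \<Rightarrow> (nat \<Rightarrow> real) \<Rightarrow> (nat \<Rightarrow> real) set \<Rightarrow> (nat \<Rightarrow> real) \<Rightarrow> (nat \<Rightarrow> real)" where
  "trop_map d w F u = (\<lambda>i. u i - (INF f\<in>F. pairing d f u) * w i)"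

text \<open>Combinatorial mutation in M = Z^d (N = Z^d with the standard pairing).\<close>
definition comb_mutation :: "nat \<Rightarrow> (nat \<Rightarrow> real) set \<Rightarrow> (nat \<Rightarrow> real) set \<Rightarrow> bool" where
  "comb_mutation d P Q \<longleftrightarrow> lattice_polytope d P \<and> (\<lambda>_. 0) \<in> P \<and>
     (\<exists>w F. primitive_vec d w \<and> lattice_polytope d F \<and> (\<forall>f\<in>F. pairing d f w = 0) \<and>
        Q = trop_map d w F ` P \<and> conv_set Q)"

definition mutation_step :: "nat \<Rightarrow> (nat \<Rightarrow> real) set \<Rightarrow> nat \<Rightarrow> (nat \<Rightarrow> real) set \<Rightarrow> bool" where
  "mutation_step d P e Q \<longleftrightarrow> unimod_equiv d P e Q \<or>
     (\<exists>k P' Q'. unimod_equiv d P k P' \<and> spanned_lattice k P' = lattice_vecs k \<and>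
        comb_mutation k P' Q' \<and> unimod_equiv k Q' e Q)"

definition mutation_related :: "nat \<times> (nat \<Rightarrow> real) set \<Rightarrow> nat \<times> (nat \<Rightarrow> real) set \<Rightarrow> bool" where
  "mutation_related a b \<longleftrightarrow>
     mutation_step (fst a) (snd a) (fst b) (snd b) \<or> mutation_step (fst b) (snd b) (fst a) (snd a)"

definition mutation_sequence :: "nat \<Rightarrow> (nat \<Rightarrow> real) set \<Rightarrow> nat \<Rightarrow> (nat \<Rightarrow> real) set \<Rightarrow> bool" where
  "mutation_sequence d P e Q \<longleftrightarrow> mutation_related\<^sup>*\<^sup>* (d, P) (e, Q)"

text \<open>R^{3 x n} identified with R^{3n}: entry (i,j), 1<=i<=3, 1<=j<=n, is coordinate (i-1)*n+(j-1).\<close>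
definition emat :: "nat \<Rightarrow> nat \<Rightarrow> nat \<Rightarrow> (nat \<Rightarrow> real)" where
  "emat n i j = (\<lambda>c. if c = (i - 1) * n + (j - 1) then 1 else 0)"

definition mf_vertex :: "nat \<Rightarrow> (nat \<Rightarrow> nat) \<Rightarrow> nat \<Rightarrow> nat \<Rightarrow> nat \<Rightarrow> (nat \<Rightarrow> real)" where
  "mf_vertex n \<sigma> a b c = (\<lambda>x. emat n (\<sigma> 1) a x + emat n (\<sigma> 2) b x + emat n (\<sigma> 3) c x)"

text \<open>A matching field assigns to each 3-subset of [n] a permutation of {1,2,3}.\<close>
definition mf_polytope :: "nat \<Rightarrow> (nat set \<Rightarrow> (nat \<Rightarrow> nat)) \<Rightarrow> (nat \<Rightarrow> real) set" where
  "mf_polytope n \<Lambda> = conv_hull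
     {mf_vertex n (\<Lambda> {a, b, c}) a b c | a b c. 1 \<le> a \<and> a < b \<and> b < c \<and> c \<le> n}"

definition swap12 :: "nat \<Rightarrow> nat" where
  "swap12 r = (if r = 1 then 2 else if r = 2 then 1 else r)"

definition block_diag :: "nat \<Rightarrow> nat set \<Rightarrow> (nat \<Rightarrow> nat)" where
  "block_diag l I = (if card (I \<inter> {1..l}) \<noteq> 1 then id else swap12)"

end

(* The vertices of P_{B_1} and P_{B_2} are 3 x n 0/1-matrices with one 1 per row, encoded by
   the triples (a, b, c) of columns of these ones. P_{B_2} arises from P_{B_1} by moving the
   vertices (2, b, c), b \<ge> 3, to (b, 2, c), and (2, 1, c) to (1, 2, c); this is done one
   value of b at a time. For b = 3 and for the final move, the vertices that move are exactly
   those with a 1 in a fixed entry, so the move is a shear and hence a unimodular equivalence.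
   For 4 \<le> b < n the polytope is first projected onto 3(n - 3) coordinates in which it is
   full-dimensional. There the move is the combinatorial mutation whose weight vector is the
   difference of a moved vertex and its image and whose factor is the segment [0, f], where f
   takes the values -1, 0, 1 on the vertices and -1 exactly on those that move. The image of
   the polytope is convex because every sum of a vertex at level 1 and a vertex at level -1
   is also a sum of two vertices of the polytope on the other side of the mutation. *)

theory Submission
  imports Defs "HOL-Library.Function_Algebras" "HOL-Analysis.Convex"
begin

instantiation "fun" :: (type, real_vector) real_vector
begin
definition scaleR_fun :: "real \<Rightarrow> ('a \<Rightarrow> 'b) \<Rightarrow> 'a \<Rightarrow> 'b" where
  "scaleR_fun r f = (\<lambda>x. r *\<^sub>R f x)"
instance by standard (auto simp: scaleR_fun_def fun_eq_iff scaleR_add_right scaleR_add_left)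
end

lemma scaleR_fun_apply [simp]: "(r *\<^sub>R f) x = r *\<^sub>R f x"
  by (simp add: scaleR_fun_def)

lemma sum_fun_apply: "sum f T x = (\<Sum>t\<in>T. f t x)"
  by (induction T rule: infinite_finite_induct) auto

lemma sum_scaleR_fun_eq: "(\<Sum>t\<in>T. c t *\<^sub>R t) = (\<lambda>i. \<Sum>t\<in>T. c t * (t i :: real))"
  by (simp add: fun_eq_iff sum_fun_apply)

lemma conv_hull_eq_convex_hull: "conv_hull S = convex hull S"
proof (intro set_eqI iffI)
  fix x assume "x \<in> conv_hull S"
  then obtain T c where "finite T" "T \<subseteq> S" "\<forall>t\<in>T. 0 \<le> c t" "sum c T = 1" "x = (\<Sum>t\<in>T. c t *\<^sub>R t)"
    unfolding conv_hull_def sum_scaleR_fun_eq by blast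
  then show "x \<in> convex hull S" unfolding convex_hull_explicit by blast
next
  fix x assume "x \<in> convex hull S"
  then obtain T c where "finite T" "T \<subseteq> S" "\<forall>t\<in>T. 0 \<le> c t" "sum c T = 1" "x = (\<Sum>t\<in>T. c t *\<^sub>R t)"
    unfolding convex_hull_explicit by blast
  moreover have "T \<noteq> {}" using \<open>sum c T = 1\<close> by auto
  ultimately show "x \<in> conv_hull S" unfolding conv_hull_def sum_scaleR_fun_eq by blast
qed

lemma int_affine_hull_eq:
  "int_affine_hull S =
     {\<Sum>t\<in>T. c t *\<^sub>R t | T c. finite T \<and> T \<subseteq> S \<and> (\<forall>t\<in>T. c t \<in> \<int>) \<and> sum c T = 1}"
  unfolding int_affine_hull_def sum_scaleR_fun_eq by blast

lemma conv_set_if_convex: "convex Q \<Longrightarrow> conv_set Q"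
  unfolding conv_set_def
proof (intro ballI allI impI)
  fix x y and t :: real assume "convex Q" "x \<in> Q" "y \<in> Q" "0 \<le> t \<and> t \<le> 1"
  then have "(1 - t) *\<^sub>R x + t *\<^sub>R y \<in> Q" by (simp add: convexD)
  then show "(\<lambda>i. (1 - t) * x i + t * y i) \<in> Q" by (simp add: plus_fun_def)
qed

lemma midpoint_in_convex_hull: "a \<in> S \<Longrightarrow> b \<in> S \<Longrightarrow> (1/2) *\<^sub>R (a + b) \<in> convex hull S"
  using convexD[OF convex_convex_hull hull_inc hull_inc, of a S b "1/2" "1/2"]
  by (simp add: scaleR_add_right)

lemma pairing_linear: "linear (pairing k f)"
  by (rule linearI) (simp_all add: pairing_def distrib_left sum.distrib sum_distrib_left mult.left_commute)

lemma lattice_vecs_add: "x \<in> lattice_vecs d \<Longrightarrow> y \<in> lattice_vecs d \<Longrightarrow> x + y \<in> lattice_vecs d"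
  unfolding lattice_vecs_def vecs_def by auto

lemma lattice_vecs_diff: "x \<in> lattice_vecs d \<Longrightarrow> y \<in> lattice_vecs d \<Longrightarrow> x - y \<in> lattice_vecs d"
  unfolding lattice_vecs_def vecs_def by auto

lemma int_affine_hull_subset_lattice_vecs:
  assumes "S \<subseteq> lattice_vecs d"
  shows "int_affine_hull S \<subseteq> lattice_vecs d"
  unfolding int_affine_hull_def lattice_vecs_def vecs_def
  using assms by (auto simp: lattice_vecs_def vecs_def intro!: sum.neutral Ints_sum Ints_mult)

section \<open>Convex hulls and the mutation map\<close>

lemma convex_sum_positive_weights:
  fixes y :: "'i \<Rightarrow> 'a::real_vector"
  assumes "convex C" "finite I" "sum a I = 1" "\<And>i. i \<in> I \<Longrightarrow> 0 \<le> a i"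
    and "\<And>i. i \<in> I \<Longrightarrow> 0 < a i \<Longrightarrow> y i \<in> C"
  shows "(\<Sum>i\<in>I. a i *\<^sub>R y i) \<in> C"
proof -
  let ?J = "{i\<in>I. 0 < a i}"
  have zero: "a i = 0" if "i \<in> I - ?J" for i
    using that assms(4)[of i] by simp
  have "sum a ?J = sum a I"
    by (rule sum.mono_neutral_left) (use assms(2) zero in auto)
  moreover have "(\<Sum>i\<in>?J. a i *\<^sub>R y i) = (\<Sum>i\<in>I. a i *\<^sub>R y i)"
    by (rule sum.mono_neutral_left) (use assms(2) zero in auto)
  moreover have "(\<Sum>i\<in>?J. a i *\<^sub>R y i) \<in> C"
    using assms calculation(1) by (intro convex_sum) auto
  ultimately show ?thesis by simp
qed

lemma weighted_sum_eq_mass_scaleR: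
  fixes u :: "'a::real_vector \<Rightarrow> real"
  assumes "finite W" "\<And>v. v \<in> W \<Longrightarrow> 0 \<le> u v"
  obtains b where "(\<Sum>v\<in>W. u v *\<^sub>R v) = sum u W *\<^sub>R b" "0 < sum u W \<Longrightarrow> b \<in> convex hull W"
proof (cases "sum u W = 0")
  case True
  then have "\<forall>v\<in>W. u v = 0" using assms sum_nonneg_eq_0_iff by blast
  then show ?thesis using that[of 0] True by simp
next
  case False
  define b where "b = (1 / sum u W) *\<^sub>R (\<Sum>v\<in>W. u v *\<^sub>R v)"
  have "b = (\<Sum>v\<in>W. (u v / sum u W) *\<^sub>R v)"
    by (simp add: b_def scaleR_sum_right)
  also have "\<dots> \<in> convex hull W"
    using assms False by (intro convex_sum) (auto simp: sum_divide_distrib[symmetric] hull_inc intro!: divide_nonneg_nonneg sum_nonneg)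
  finally show ?thesis using that[of b] False by (simp add: b_def)
qed

definition crossing_midpoints :: "('a \<Rightarrow> real) \<Rightarrow> 'a set \<Rightarrow> 'a::real_vector set" where
  "crossing_midpoints L V = {(1/2) *\<^sub>R (p + q) | p q. p \<in> V \<and> q \<in> V \<and> L p = 1 \<and> L q = -1}"

lemma crossing_midpoints_uminus: "crossing_midpoints (\<lambda>u. - L u) V = crossing_midpoints L V"
  unfolding crossing_midpoints_def by (auto, (metis add.commute)+)

lemma crossing_midpoints_level:
  "linear L \<Longrightarrow> z \<in> crossing_midpoints L V \<Longrightarrow> L z = 0"
  unfolding crossing_midpoints_def by (auto simp: linear_scale linear_add)

lemma convex_hull_level_decomposition:
  fixes V :: "'a::real_vector set"
  assumes fin: "finite V" and lin: "linear L" and vals: "\<forall>v\<in>V. L v \<in> {-1,0,1}"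
    and x: "x \<in> convex hull V"
  obtains Z P N bz bp bn where "x = Z *\<^sub>R bz + P *\<^sub>R bp + N *\<^sub>R bn" "Z + P + N = 1"
    "0 \<le> Z" "0 \<le> P" "0 \<le> N" "L x = P - N"
    "0 < Z \<Longrightarrow> bz \<in> convex hull {v\<in>V. L v = 0}" "0 < P \<Longrightarrow> bp \<in> convex hull {v\<in>V. L v = 1}"
    "0 < N \<Longrightarrow> bn \<in> convex hull {v\<in>V. L v = -1}"
proof -
  obtain u where u0: "\<forall>v\<in>V. 0 \<le> u v" and u1: "sum u V = 1" and ux: "(\<Sum>v\<in>V. u v *\<^sub>R v) = x"
    using x unfolding convex_hull_finite[OF fin] by blast
  define Vz Vp Vn where "Vz = {v\<in>V. L v = 0}" and "Vp = {v\<in>V. L v = 1}" and "Vn = {v\<in>V. L v = -1}"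
  have fins: "finite Vz" "finite Vp" "finite Vn" using fin by (auto simp: Vz_def Vp_def Vn_def)
  have split: "sum g V = sum g Vz + sum g Vp + sum g Vn" for g :: "'a \<Rightarrow> 'b::comm_monoid_add"
  proof -
    have V_eq: "V = Vz \<union> Vp \<union> Vn" using vals by (auto simp: Vz_def Vp_def Vn_def)
    have "sum g V = sum g (Vz \<union> Vp) + sum g Vn"
      by (subst V_eq, rule sum.union_disjoint) (use fins in \<open>auto simp: Vz_def Vp_def Vn_def\<close>)
    also have "sum g (Vz \<union> Vp) = sum g Vz + sum g Vp"
      by (rule sum.union_disjoint) (use fins in \<open>auto simp: Vz_def Vp_def Vn_def\<close>)
    finally show ?thesis .
  qed
  obtain bz where bz: "(\<Sum>v\<in>Vz. u v *\<^sub>R v) = sum u Vz *\<^sub>R bz" "0 < sum u Vz \<Longrightarrow> bz \<in> convex hull Vz"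
    using weighted_sum_eq_mass_scaleR[OF fins(1), of u] u0 by (auto simp: Vz_def)
  obtain bp where bp: "(\<Sum>v\<in>Vp. u v *\<^sub>R v) = sum u Vp *\<^sub>R bp" "0 < sum u Vp \<Longrightarrow> bp \<in> convex hull Vp"
    using weighted_sum_eq_mass_scaleR[OF fins(2), of u] u0 by (auto simp: Vp_def)
  obtain bn where bn: "(\<Sum>v\<in>Vn. u v *\<^sub>R v) = sum u Vn *\<^sub>R bn" "0 < sum u Vn \<Longrightarrow> bn \<in> convex hull Vn"
    using weighted_sum_eq_mass_scaleR[OF fins(3), of u] u0 by (auto simp: Vn_def)
  have x_eq: "x = sum u Vz *\<^sub>R bz + sum u Vp *\<^sub>R bp + sum u Vn *\<^sub>R bn"
    using ux split[of "\<lambda>v. u v *\<^sub>R v"] bz bp bn by simp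
  have masses: "sum u Vz + sum u Vp + sum u Vn = 1" using u1 split[of u] by simp
  have nonneg: "0 \<le> sum u Vz" "0 \<le> sum u Vp" "0 \<le> sum u Vn"
    using u0 by (auto simp: Vz_def Vp_def Vn_def intro: sum_nonneg)
  have "L x = (\<Sum>v\<in>Vz. u v * L v) + (\<Sum>v\<in>Vp. u v * L v) + (\<Sum>v\<in>Vn. u v * L v)"
    using split ux[symmetric] by (simp add: linear_sum[OF lin] linear_scale[OF lin])
  then have "L x = sum u Vp - sum u Vn" by (simp add: Vz_def Vp_def Vn_def sum_negf)
  from that[OF x_eq masses nonneg this] show thesis
    using bz(2) bp(2) bn(2) unfolding Vz_def Vp_def Vn_def by blast
qed

text \<open>Of the masses P on level 1 and N on level -1 of a point with 0 \<le> L x, we have N \<le> P,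
  and the mass N on level -1 is paired with an equal mass on level 1.\<close>
lemma nonneg_level_in_convex_hull_crossing_midpoints:
  fixes V :: "'a::real_vector set"
  assumes fin: "finite V" and lin: "linear L" and vals: "\<forall>v\<in>V. L v \<in> {-1,0,1}"
    and x: "x \<in> convex hull V" and nonneg: "0 \<le> L x"
  shows "x \<in> convex hull ({v\<in>V. 0 \<le> L v} \<union> crossing_midpoints L V)"
proof -
  define A where "A = convex hull ({v\<in>V. 0 \<le> L v} \<union> crossing_midpoints L V)"
  obtain Z P N bz bp bn where x_eq: "x = Z *\<^sub>R bz + P *\<^sub>R bp + N *\<^sub>R bn" and masses: "Z + P + N = 1"
    and nonnegs: "0 \<le> Z" "0 \<le> P" "0 \<le> N" and "L x = P - N"
    and bz: "0 < Z \<Longrightarrow> bz \<in> convex hull {v\<in>V. L v = 0}"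
    and bp: "0 < P \<Longrightarrow> bp \<in> convex hull {v\<in>V. L v = 1}"
    and bn: "0 < N \<Longrightarrow> bn \<in> convex hull {v\<in>V. L v = -1}"
    by (rule convex_hull_level_decomposition[OF fin lin vals x], rule that)
  then have PN: "N \<le> P" using nonneg by simp
  define m where "m = (1/2) *\<^sub>R (bp + bn)"
  have "x = (\<Sum>i\<in>{0,1,2::nat}. [Z, P - N, 2 * N] ! i *\<^sub>R [bz, bp, m] ! i)"
    by (simp add: x_eq m_def algebra_simps)
  also have "\<dots> \<in> A"
  proof (rule convex_sum_positive_weights)
    have "convex hull {v\<in>V. L v = 0} \<subseteq> A" "convex hull {v\<in>V. L v = 1} \<subseteq> A"
      unfolding A_def by (auto intro!: hull_mono)
    moreover have "m \<in> A" if "0 < N"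
    proof -
      have "m \<in> (\<lambda>z. (1/2) *\<^sub>R z) ` (convex hull {v\<in>V. L v = 1} + convex hull {v\<in>V. L v = -1})"
        unfolding m_def using bp bn that PN by (intro imageI set_plus_intro) auto
      also have "\<dots> = convex hull crossing_midpoints L V"
      proof -
        have "crossing_midpoints L V = (\<lambda>z. (1/2) *\<^sub>R z) ` ({v\<in>V. L v = 1} + {v\<in>V. L v = -1})"
          unfolding crossing_midpoints_def set_plus_def by auto
        then show ?thesis by (simp add: convex_hull_scaling convex_hull_set_plus)
      qed
      also have "\<dots> \<subseteq> A" unfolding A_def by (intro hull_mono) auto
      finally show ?thesis .
    qed
    ultimately show "[bz, bp, m] ! i \<in> A" if "i \<in> {0,1,2}" "0 < [Z, P - N, 2 * N] ! i" for i
      using that bz bp nonnegs by auto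
  qed (use masses nonnegs PN in \<open>auto simp: A_def\<close>)
  finally show ?thesis unfolding A_def .
qed

definition mutation_map :: "('a \<Rightarrow> real) \<Rightarrow> 'a \<Rightarrow> 'a \<Rightarrow> 'a::real_vector" where
  "mutation_map L w u = u - min 0 (L u) *\<^sub>R w"

lemma mutation_map_level: "linear L \<Longrightarrow> L w = 0 \<Longrightarrow> L (mutation_map L w u) = L u"
  by (simp add: mutation_map_def linear_diff linear_scale)

lemma mutation_map_inverse:
  assumes "linear L" "L w = 0"
  shows "mutation_map L (- w) (mutation_map L w u) = u"
  using mutation_map_level[OF assms, of u] by (simp add: mutation_map_def)

lemma mutation_map_in_convex_hull_nonneg:
  fixes V :: "'a::real_vector set"
  assumes fin: "finite V" and lin: "linear L" and vals: "\<forall>v\<in>V. L v \<in> {-1,0,1}"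
    and mid: "crossing_midpoints L V \<subseteq> convex hull (mutation_map L w ` V)"
    and x: "x \<in> convex hull V" and nonneg: "0 \<le> L x"
  shows "mutation_map L w x \<in> convex hull (mutation_map L w ` V)"
proof -
  let ?A = "convex hull (mutation_map L w ` V)"
  have "{v\<in>V. 0 \<le> L v} \<subseteq> mutation_map L w ` V"
  proof
    fix v assume "v \<in> {v\<in>V. 0 \<le> L v}"
    then have "v \<in> V" "mutation_map L w v = v" by (auto simp: mutation_map_def)
    then show "v \<in> mutation_map L w ` V" by (metis image_eqI)
  qed
  then have "{v\<in>V. 0 \<le> L v} \<union> crossing_midpoints L V \<subseteq> ?A"
    using mid hull_subset[of "mutation_map L w ` V" convex] by blast
  then have "convex hull ({v\<in>V. 0 \<le> L v} \<union> crossing_midpoints L V) \<subseteq> ?A"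
    by (intro hull_minimal) simp_all
  then show ?thesis
    using nonneg_level_in_convex_hull_crossing_midpoints[OF fin lin vals x nonneg] nonneg
    by (auto simp: mutation_map_def)
qed

lemma mutation_map_in_convex_hull_neg:
  fixes V :: "'a::real_vector set"
  assumes fin: "finite V" and lin: "linear L" and vals: "\<forall>v\<in>V. L v \<in> {-1,0,1}"
    and mid: "crossing_midpoints L V \<subseteq> convex hull (mutation_map L w ` V)"
    and x: "x \<in> convex hull V" and neg: "L x < 0"
  shows "mutation_map L w x \<in> convex hull (mutation_map L w ` V)"
proof -
  let ?A = "convex hull (mutation_map L w ` V)"
  define S where "S = {v\<in>V. L v \<le> 0} \<union> crossing_midpoints L V"
  have "x \<in> convex hull ({v\<in>V. 0 \<le> - L v} \<union> crossing_midpoints (\<lambda>u. - L u) V)"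
    using vals neg
    by (intro nonneg_level_in_convex_hull_crossing_midpoints[OF fin linear_compose_neg[OF lin] _ x]) auto
  then have "x \<in> convex hull S" by (simp add: S_def crossing_midpoints_uminus)
  \<comment> \<open>below the hyperplane the mutation map is the linear map u \<mapsto> u - L u w\<close>
  define T where "T u = u - L u *\<^sub>R w" for u
  have "linear T"
    unfolding T_def using lin by (intro linearI) (simp_all add: linear_add linear_scale algebra_simps)
  have "T ` S \<subseteq> ?A"
  proof
    fix y assume "y \<in> T ` S"
    then obtain s where s: "s \<in> S" and y: "y = T s" by blast
    show "y \<in> ?A"
    proof (cases "s \<in> crossing_midpoints L V")
      case True
      then show ?thesis using mid crossing_midpoints_level[OF lin] by (auto simp: y T_def)
    next
      case False
      then have "s \<in> V" "L s \<le> 0" using s by (auto simp: S_def)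
      then have "y = mutation_map L w s" by (simp add: y T_def mutation_map_def)
      then show ?thesis using \<open>s \<in> V\<close> by (simp add: hull_inc)
    qed
  qed
  then have "convex hull (T ` S) \<subseteq> ?A" by (simp add: hull_minimal)
  moreover have "mutation_map L w x \<in> convex hull (T ` S)"
    using \<open>x \<in> convex hull S\<close> neg convex_hull_linear_image[OF \<open>linear T\<close>]
    by (auto simp: T_def mutation_map_def)
  ultimately show ?thesis by blast
qed

lemma mutation_map_convex_hull_subset:
  fixes V :: "'a::real_vector set"
  assumes "finite V" "linear L" "\<forall>v\<in>V. L v \<in> {-1,0,1}"
    and "crossing_midpoints L V \<subseteq> convex hull (mutation_map L w ` V)"
  shows "mutation_map L w ` (convex hull V) \<subseteq> convex hull (mutation_map L w ` V)"
proof
  fix z assume "z \<in> mutation_map L w ` (convex hull V)"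
  then obtain x where "x \<in> convex hull V" "z = mutation_map L w x" by blast
  then show "z \<in> convex hull (mutation_map L w ` V)"
    using mutation_map_in_convex_hull_nonneg[OF assms] mutation_map_in_convex_hull_neg[OF assms]
    by (cases "0 \<le> L x") auto
qed

text \<open>The inverse of the mutation map is the mutation map for -w, which exchanges the two
  midpoint hypotheses.\<close>
lemma mutation_map_convex_hull:
  fixes V :: "'a::real_vector set"
  assumes fin: "finite V" and lin: "linear L" and Lw: "L w = 0" and vals: "\<forall>v\<in>V. L v \<in> {-1,0,1}"
    and mid: "crossing_midpoints L V \<subseteq> convex hull (mutation_map L w ` V)"
    and mid': "crossing_midpoints L (mutation_map L w ` V) \<subseteq> convex hull V"
  shows "mutation_map L w ` (convex hull V) = convex hull (mutation_map L w ` V)"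
proof
  show "mutation_map L w ` (convex hull V) \<subseteq> convex hull (mutation_map L w ` V)"
    by (rule mutation_map_convex_hull_subset[OF fin lin vals mid])
  let ?W = "mutation_map L w ` V"
  have inverse: "mutation_map L (- w) (mutation_map L w u) = u" for u
    using mutation_map_inverse[OF lin Lw] .
  have round_trip: "mutation_map L (- w) ` ?W = V" by (simp add: image_comp inverse comp_def)
  have "mutation_map L (- w) ` (convex hull ?W) \<subseteq> convex hull V"
    using mutation_map_convex_hull_subset[of ?W L "- w"] fin lin vals mid'
    by (simp add: round_trip mutation_map_level[OF lin Lw])
  moreover have "y = mutation_map L w (mutation_map L (- w) y)" for y
    using mutation_map_inverse[OF lin, of "- w"] Lw by (simp add: linear_neg[OF lin])
  ultimately show "convex hull ?W \<subseteq> mutation_map L w ` (convex hull V)"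
    by blast
qed

lemma pairing_scaleR_left: "pairing k (t *\<^sub>R f) u = t * pairing k f u"
  by (simp add: pairing_def sum_distrib_left mult.assoc)

lemma conv_hull_segment: "conv_hull {0, f} = (\<lambda>t. t *\<^sub>R f) ` {0..1}"
proof -
  have "conv_hull {0, f} = {v *\<^sub>R f | u v. 0 \<le> u \<and> 0 \<le> v \<and> u + v = (1::real)}"
    by (simp add: conv_hull_eq_convex_hull convex_hull_2)
  also have "\<dots> = (\<lambda>t. t *\<^sub>R f) ` {0..1}"
  proof (intro set_eqI iffI)
    fix x assume "x \<in> {v *\<^sub>R f | u v. 0 \<le> u \<and> 0 \<le> v \<and> u + v = (1::real)}"
    then obtain u v where "x = v *\<^sub>R f" "0 \<le> u" "0 \<le> v" "u + v = 1" by blast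
    then show "x \<in> (\<lambda>t. t *\<^sub>R f) ` {0..1}" by (intro image_eqI[of _ _ v]) auto
  next
    fix x assume "x \<in> (\<lambda>t. t *\<^sub>R f) ` {0..1}"
    then obtain t where "t \<in> {0..1}" "x = t *\<^sub>R f" by blast
    then show "x \<in> {v *\<^sub>R f | u v. 0 \<le> u \<and> 0 \<le> v \<and> u + v = (1::real)}"
      by (intro CollectI exI[of _ "1 - t"] exI[of _ t]) auto
  qed
  finally show ?thesis .
qed

lemma trop_map_segment: "trop_map k w (conv_hull {0, f}) = mutation_map (pairing k f) w"
proof
  fix u
  have "(\<lambda>g. pairing k g u) ` conv_hull {0, f} = (\<lambda>t. t * pairing k f u) ` {0..1}"
    by (simp add: conv_hull_segment image_image pairing_scaleR_left)
  moreover have "(INF t\<in>{0..1}. t * a) = min 0 a" for a :: real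
  proof (rule cInf_eq_minimum)
    show "min 0 a \<in> (\<lambda>t. t * a) ` {0..1}"
    proof (cases "0 \<le> a")
      case True
      then show ?thesis by (intro image_eqI[of _ _ 0]) auto
    next
      case False
      then show ?thesis by (intro image_eqI[of _ _ 1]) auto
    qed
    show "min 0 a \<le> x" if x_mem: "x \<in> (\<lambda>t. t * a) ` {0..1}" for x
    proof -
      obtain t where "t \<in> {0..1}" and x: "x = t * a" using x_mem by blast
      then have t: "0 \<le> t" "t \<le> 1" by auto
      have "(1 - t) * a \<le> 0" if "a < 0" using t that by (intro mult_nonneg_nonpos) auto
      then show ?thesis using t x by (cases "0 \<le> a") (auto simp: algebra_simps)
    qed
  qed
  ultimately show "trop_map k w (conv_hull {0, f}) u = mutation_map (pairing k f) w u"
    by (simp add: trop_map_def mutation_map_def fun_eq_iff)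
qed

lemma primitive_vec_if_coord_one:
  assumes "w \<in> lattice_vecs k" "w i = 1"
  shows "primitive_vec k w"
  unfolding primitive_vec_def
proof (intro conjI allI ballI impI)
  show "w \<noteq> (\<lambda>_. 0)" using assms(2) by auto
  fix m :: nat and v assume v: "v \<in> lattice_vecs k" and w: "w = (\<lambda>i. real m * v i)"
  have "v i \<in> \<int>" using v unfolding lattice_vecs_def by auto
  then obtain z where "v i = of_int z" by (auto elim: Ints_cases)
  then have "real m * of_int z = 1" using assms(2) w by simp
  then have "int m * z = 1" by (metis of_int_eq_1_iff of_int_mult of_int_of_nat_eq)
  then show "m = 1" using pos_zmult_eq_1_iff[of "int m" z] by (cases "m = 0") auto
qed (use assms in simp)

lemma comb_mutation_segmentI:
  fixes V :: "(nat \<Rightarrow> real) set"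
  assumes fin: "finite V" and lat: "V \<subseteq> lattice_vecs k" and orig: "0 \<in> V"
    and f: "f \<in> lattice_vecs k" and w: "w \<in> lattice_vecs k" "w i = 1" and fw: "pairing k f w = 0"
    and vals: "\<forall>v\<in>V. pairing k f v \<in> {-1,0,1}"
    and mid: "crossing_midpoints (pairing k f) V \<subseteq> convex hull (mutation_map (pairing k f) w ` V)"
    and mid': "crossing_midpoints (pairing k f) (mutation_map (pairing k f) w ` V) \<subseteq> convex hull V"
  shows "comb_mutation k (convex hull V) (convex hull (mutation_map (pairing k f) w ` V))"
  unfolding comb_mutation_def
proof (intro conjI exI)
  show "lattice_polytope k (convex hull V)"
    unfolding lattice_polytope_def conv_hull_eq_convex_hull using fin lat orig by blast
  show "(\<lambda>_. 0) \<in> convex hull V" using orig by (simp add: hull_inc zero_fun_def[symmetric])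
  show "primitive_vec k w" by (rule primitive_vec_if_coord_one[OF w])
  show "lattice_polytope k (conv_hull {0, f})"
    unfolding lattice_polytope_def using f
    by (intro exI[of _ "{0, f}"]) (auto simp: lattice_vecs_def vecs_def)
  show "\<forall>g\<in>conv_hull {0, f}. pairing k g w = 0"
    using fw by (auto simp: conv_hull_segment pairing_scaleR_left)
  show "convex hull (mutation_map (pairing k f) w ` V) = trop_map k w (conv_hull {0, f}) ` (convex hull V)"
    using mutation_map_convex_hull[OF fin pairing_linear _ vals mid mid'] fw
    by (simp add: trop_map_segment)
  show "conv_set (convex hull (mutation_map (pairing k f) w ` V))"
    by (simp add: conv_set_if_convex)
qed

section \<open>Integral affine maps and unimodular equivalence\<close>

definition int_affine_map :: "nat \<Rightarrow> nat \<Rightarrow> ((nat \<Rightarrow> real) \<Rightarrow> (nat \<Rightarrow> real)) \<Rightarrow> bool" where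
  "int_affine_map d e F \<longleftrightarrow> (\<exists>A b. (\<forall>a i. A a i \<in> \<int>) \<and> (\<forall>a. b a \<in> \<int>) \<and>
      (\<forall>x. F x = (\<lambda>a. if a < e then b a + (\<Sum>i<d. A a i * x i) else 0)))"

lemma int_affine_map_imp_affine_map: "int_affine_map d e F \<Longrightarrow> affine_map d e F"
  unfolding int_affine_map_def affine_map_def by blast

lemma int_affine_map_lattice_vecs:
  assumes "int_affine_map d e F" "x \<in> lattice_vecs d"
  shows "F x \<in> lattice_vecs e"
  using assms unfolding int_affine_map_def lattice_vecs_def vecs_def
  by (auto intro!: Ints_add Ints_sum Ints_mult)

lemma int_affine_map_translated_linear:
  assumes "int_affine_map d e F"
  obtains c T where "linear T" "\<And>x. F x = c + T x"
proof -
  obtain A b where F: "\<And>x. F x = (\<lambda>a. if a < e then b a + (\<Sum>i<d. A a i * x i) else 0)"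
    using assms unfolding int_affine_map_def by blast
  define T :: "(nat \<Rightarrow> real) \<Rightarrow> nat \<Rightarrow> real"
    where "T x = (\<lambda>a. if a < e then (\<Sum>i<d. A a i * x i) else 0)" for x
  have "linear T"
    by (rule linearI)
      (simp_all add: T_def fun_eq_iff distrib_left sum.distrib sum_distrib_left mult.left_commute)
  moreover have "F x = (\<lambda>a. if a < e then b a else 0) + T x" for x
    by (simp add: F T_def fun_eq_iff)
  ultimately show thesis using that by blast
qed

lemma int_affine_map_affine_sum:
  assumes "int_affine_map d e F" "sum c I = 1"
  shows "F (\<Sum>i\<in>I. c i *\<^sub>R y i) = (\<Sum>i\<in>I. c i *\<^sub>R F (y i))"
proof -
  obtain a T where "linear T" and F: "\<And>x. F x = a + T x"
    using int_affine_map_translated_linear[OF assms(1)] by blast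
  have "F (\<Sum>i\<in>I. c i *\<^sub>R y i) = sum c I *\<^sub>R a + (\<Sum>i\<in>I. c i *\<^sub>R T (y i))"
    using assms(2) by (simp add: F linear_sum[OF \<open>linear T\<close>] linear_scale[OF \<open>linear T\<close>])
  also have "\<dots> = (\<Sum>i\<in>I. c i *\<^sub>R F (y i))"
    by (simp add: F scaleR_add_right sum.distrib scaleR_sum_left)
  finally show ?thesis .
qed

lemma int_affine_map_convex_hull_image:
  assumes "int_affine_map d e F"
  shows "F ` (convex hull S) = convex hull (F ` S)"
proof -
  obtain a T where "linear T" and F: "\<And>x. F x = a + T x"
    using int_affine_map_translated_linear[OF assms] by blast
  have "F ` (convex hull S) = (+) a ` T ` (convex hull S)" by (simp add: F image_image)
  also have "\<dots> = (+) a ` (convex hull (T ` S))" by (simp add: convex_hull_linear_image[OF \<open>linear T\<close>])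
  also have "\<dots> = convex hull ((+) a ` T ` S)" by (simp add: convex_hull_translation)
  also have "\<dots> = convex hull (F ` S)" by (simp add: F image_image)
  finally show ?thesis .
qed

lemma int_affine_map_inverse_on_convex_hull:
  assumes "int_affine_map d e F" "int_affine_map e d G" "\<forall>v\<in>V. G (F v) = v" "x \<in> convex hull V"
  shows "G (F x) = x"
proof -
  obtain T u where T: "finite T" "T \<subseteq> V" "sum u T = 1" "x = (\<Sum>t\<in>T. u t *\<^sub>R t)"
    using assms(4) unfolding convex_hull_explicit by blast
  then show ?thesis
    using assms(3) by (simp add: int_affine_map_affine_sum[OF assms(1)] int_affine_map_affine_sum[OF assms(2)]
        subset_iff cong: sum.cong)
qed

lemma int_affine_hull_base: "s \<in> S \<Longrightarrow> s \<in> int_affine_hull S"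
  unfolding int_affine_hull_eq by (intro CollectI exI[of _ "{s}"] exI[of _ "\<lambda>_. 1"]) auto

lemma int_affine_hull_mono: "S \<subseteq> S' \<Longrightarrow> int_affine_hull S \<subseteq> int_affine_hull S'"
  unfolding int_affine_hull_def by blast

lemma int_affine_hull_indexed_sum:
  assumes "finite I" "\<forall>i\<in>I. c i \<in> \<int>" "sum c I = 1" "\<forall>i\<in>I. y i \<in> S"
  shows "(\<Sum>i\<in>I. c i *\<^sub>R y i) \<in> int_affine_hull S"
proof -
  define e where "e s = sum c {i\<in>I. y i = s}" for s
  have "(\<Sum>i\<in>I. c i *\<^sub>R y i) = (\<Sum>s\<in>y ` I. \<Sum>i\<in>{i\<in>I. y i = s}. c i *\<^sub>R y i)"
    using assms(1) by (rule sum.image_gen)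
  also have "\<dots> = (\<Sum>s\<in>y ` I. e s *\<^sub>R s)"
    by (simp add: e_def scaleR_sum_left)
  finally have eq: "(\<Sum>i\<in>I. c i *\<^sub>R y i) = (\<Sum>s\<in>y ` I. e s *\<^sub>R s)" .
  have "sum e (y ` I) = 1"
    using sum.image_gen[OF assms(1), of c y] assms(3) by (simp add: e_def)
  moreover have "\<forall>s\<in>y ` I. e s \<in> \<int>"
    using assms(2) by (auto simp: e_def intro!: Ints_sum)
  ultimately show ?thesis
    unfolding eq int_affine_hull_eq using assms(1,4) by blast
qed

lemma int_affine_hull_affine_sum:
  assumes I: "finite I" "\<forall>i\<in>I. c i \<in> \<int>" "sum c I = 1" and y: "\<forall>i\<in>I. y i \<in> int_affine_hull S"
  shows "(\<Sum>i\<in>I. c i *\<^sub>R y i) \<in> int_affine_hull S"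
proof -
  have choice: "\<forall>i\<in>I. \<exists>p. finite (fst p) \<and> fst p \<subseteq> S \<and> (\<forall>t\<in>fst p. snd p t \<in> \<int>) \<and>
      sum (snd p) (fst p) = 1 \<and> y i = (\<Sum>t\<in>fst p. snd p t *\<^sub>R t)"
    using y unfolding int_affine_hull_eq by fastforce
  obtain p where p: "\<forall>i\<in>I. finite (fst (p i)) \<and> fst (p i) \<subseteq> S \<and> (\<forall>t\<in>fst (p i). snd (p i) t \<in> \<int>) \<and>
      sum (snd (p i)) (fst (p i)) = 1 \<and> y i = (\<Sum>t\<in>fst (p i). snd (p i) t *\<^sub>R t)"
    using bchoice[OF choice] by blast
  define T d where "T i = fst (p i)" and "d i = snd (p i)" for i
  define Q where "Q = Sigma I T"
  have fin: "\<forall>i\<in>I. finite (T i)" using p by (simp add: T_def)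
  have "(\<Sum>i\<in>I. c i *\<^sub>R y i) = (\<Sum>i\<in>I. \<Sum>t\<in>T i. (c i * d i t) *\<^sub>R t)"
    using p by (intro sum.cong) (simp_all add: T_def d_def scaleR_sum_right)
  also have "\<dots> = (\<Sum>q\<in>Q. (c (fst q) * d (fst q) (snd q)) *\<^sub>R snd q)"
    unfolding Q_def using I(1) fin by (subst sum.Sigma) (simp_all add: split_def)
  also have "\<dots> \<in> int_affine_hull S"
  proof (rule int_affine_hull_indexed_sum)
    show "finite Q" using I(1) fin by (simp add: Q_def)
    show "\<forall>q\<in>Q. c (fst q) * d (fst q) (snd q) \<in> \<int>"
      using I(2) p by (auto simp: Q_def T_def d_def)
    show "\<forall>q\<in>Q. snd q \<in> S" using p by (auto simp: Q_def T_def)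
    have "(\<Sum>i\<in>I. c i * sum (d i) (T i)) = (\<Sum>q\<in>Q. c (fst q) * d (fst q) (snd q))"
      unfolding Q_def sum_distrib_left using I(1) fin by (subst sum.Sigma) (simp_all add: split_def)
    then show "(\<Sum>q\<in>Q. c (fst q) * d (fst q) (snd q)) = 1"
      using p I(3) by (simp add: T_def d_def)
  qed
  finally show ?thesis .
qed

lemma int_affine_hull_parallelogram:
  assumes "a \<in> int_affine_hull S" "b \<in> int_affine_hull S" "z \<in> int_affine_hull S"
  shows "a - b + z \<in> int_affine_hull S"
proof -
  define c y where "c i = (if i = 1 then -1 else 1 :: real)" and "y i = (if i = 0 then a else if i = 1 then b else z)"
    for i :: nat
  have "(\<Sum>i\<in>{0, 1, 2}. c i *\<^sub>R y i) \<in> int_affine_hull S"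
    using assms by (intro int_affine_hull_affine_sum) (auto simp: c_def y_def)
  then show ?thesis by (simp add: c_def y_def algebra_simps)
qed

lemma int_affine_map_int_affine_hull:
  assumes "int_affine_map d e F" "F ` S \<subseteq> S'" "x \<in> int_affine_hull S"
  shows "F x \<in> int_affine_hull S'"
proof -
  obtain T c where T: "finite T" "T \<subseteq> S" "\<forall>t\<in>T. c t \<in> \<int>" "sum c T = 1" "x = (\<Sum>t\<in>T. c t *\<^sub>R t)"
    using assms(3) unfolding int_affine_hull_eq by blast
  then have "F x = (\<Sum>t\<in>T. c t *\<^sub>R F t)" by (simp add: int_affine_map_affine_sum[OF assms(1)])
  also have "\<dots> \<in> int_affine_hull S'"
    using T assms(2) by (intro int_affine_hull_indexed_sum) auto
  finally show ?thesis .
qed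

lemma int_affine_map_inverse_on_int_affine_hull:
  assumes "int_affine_map d e F" "int_affine_map e d G" "\<forall>s\<in>S. G (F s) = s" "x \<in> int_affine_hull S"
  shows "G (F x) = x"
proof -
  obtain T c where T: "T \<subseteq> S" "sum c T = 1" "x = (\<Sum>t\<in>T. c t *\<^sub>R t)"
    using assms(4) unfolding int_affine_hull_eq by blast
  then show ?thesis
    using assms(3) by (simp add: int_affine_map_affine_sum[OF assms(1)] int_affine_map_affine_sum[OF assms(2)]
        subset_iff cong: sum.cong)
qed

lemma unimod_equiv_if_int_affine_inverse:
  assumes fin: "finite V" and ne: "V \<noteq> {}" and lat: "V \<subseteq> lattice_vecs d"
    and F: "int_affine_map d e F" and G: "int_affine_map e d G" and GF: "\<forall>v\<in>V. G (F v) = v"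
  shows "unimod_equiv d (convex hull V) e (convex hull (F ` V))"
proof -
  let ?P = "convex hull V" and ?Q = "convex hull (F ` V)"
  have lp: "lattice_polytope d ?P" "lattice_polytope e ?Q"
    unfolding lattice_polytope_def conv_hull_eq_convex_hull
    using fin ne lat int_affine_map_lattice_vecs[OF F] by blast+
  have FP: "F ` ?P = ?Q" by (rule int_affine_map_convex_hull_image[OF F])
  have "G ` F ` V = (\<lambda>v. v) ` V" unfolding image_image using GF by (intro image_cong) auto
  then have GQ: "G ` ?Q = ?P" using int_affine_map_convex_hull_image[OF G, of "F ` V"] by simp
  have GF_P: "\<forall>x\<in>?P. G (F x) = x" using int_affine_map_inverse_on_convex_hull[OF F G GF] by blast
  have FG_Q: "\<forall>y\<in>?Q. F (G y) = y" using int_affine_map_inverse_on_convex_hull[OF G F, of "F ` V"] GF by auto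
  have "bij_betw F (spanned_lattice d ?P) (spanned_lattice e ?Q)"
    unfolding spanned_lattice_def
  proof (rule bij_betw_byWitness[where f'=G])
    show "\<forall>x\<in>int_affine_hull (?P \<inter> lattice_vecs d). G (F x) = x"
      using int_affine_map_inverse_on_int_affine_hull[OF F G] GF_P by blast
    show "\<forall>y\<in>int_affine_hull (?Q \<inter> lattice_vecs e). F (G y) = y"
      using int_affine_map_inverse_on_int_affine_hull[OF G F] FG_Q by blast
    have "F ` (?P \<inter> lattice_vecs d) \<subseteq> ?Q \<inter> lattice_vecs e"
      using FP int_affine_map_lattice_vecs[OF F] by blast
    then show "F ` int_affine_hull (?P \<inter> lattice_vecs d) \<subseteq> int_affine_hull (?Q \<inter> lattice_vecs e)"
      using int_affine_map_int_affine_hull[OF F] by blast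
    have "G ` (?Q \<inter> lattice_vecs e) \<subseteq> ?P \<inter> lattice_vecs d"
      using GQ int_affine_map_lattice_vecs[OF G] by blast
    then show "G ` int_affine_hull (?Q \<inter> lattice_vecs e) \<subseteq> int_affine_hull (?P \<inter> lattice_vecs d)"
      using int_affine_map_int_affine_hull[OF G] by blast
  qed
  then show ?thesis
    unfolding unimod_equiv_def using lp FP int_affine_map_imp_affine_map[OF F] by blast
qed

lemma mutation_related_if_unimod_equiv: "unimod_equiv d P e Q \<Longrightarrow> mutation_related (d, P) (e, Q)"
  unfolding mutation_related_def mutation_step_def by simp

definition shear :: "nat \<Rightarrow> nat \<Rightarrow> (nat \<Rightarrow> real) \<Rightarrow> (nat \<Rightarrow> real) \<Rightarrow> (nat \<Rightarrow> real)" where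
  "shear d i W x = (\<lambda>a. if a < d then x a + x i * W a else 0)"

lemma shear_int_affine_map:
  assumes "i < d" "\<forall>a. W a \<in> \<int>"
  shows "int_affine_map d d (shear d i W)"
  unfolding int_affine_map_def
proof (intro exI conjI allI)
  define A where "A a k = (if k = a then 1 else 0) + (if k = i then W a else 0)" for a k
  show "A a k \<in> \<int>" for a k using assms(2) by (simp add: A_def)
  show "(0::real) \<in> \<int>" by simp
  show "shear d i W x = (\<lambda>a. if a < d then 0 + (\<Sum>k<d. A a k * x k) else 0)" for x
  proof
    fix a
    show "shear d i W x a = (if a < d then 0 + (\<Sum>k<d. A a k * x k) else 0)"
    proof (cases "a < d")
      case True
      have "(\<Sum>k<d. A a k * x k) = (\<Sum>k<d. (if k = a then x k else 0) + (if k = i then W a * x k else 0))"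
        by (rule sum.cong) (auto simp: A_def algebra_simps)
      also have "\<dots> = x a + W a * x i" using True assms(1) by (simp add: sum.distrib)
      finally show ?thesis using True by (simp add: shear_def mult.commute)
    qed (simp add: shear_def)
  qed
qed

lemma shear_eq: "x \<in> vecs d \<Longrightarrow> W \<in> vecs d \<Longrightarrow> shear d i W x = x + x i *\<^sub>R W"
  unfolding shear_def vecs_def by (auto simp: fun_eq_iff)

text \<open>The shear v \<mapsto> v + v_i W is inverted on V by the shear v \<mapsto> v - v_i' W, as long as
  the coordinate i' of the sheared points reproduces the coordinate i.\<close>
lemma unimod_equiv_shear:
  assumes fin: "finite V" and ne: "V \<noteq> {}" and lat: "V \<subseteq> lattice_vecs d" and W: "W \<in> lattice_vecs d"
    and i: "i < d" "i' < d" and inv: "\<forall>v\<in>V. (v + v i *\<^sub>R W) i' = v i"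
  shows "unimod_equiv d (convex hull V) d (convex hull ((\<lambda>v. v + v i *\<^sub>R W) ` V))"
proof -
  have vec: "v \<in> vecs d" if "v \<in> lattice_vecs d" for v using that by (simp add: lattice_vecs_def)
  have int: "\<forall>a. W a \<in> \<int>" "\<forall>a. (- W) a \<in> \<int>" using W by (auto simp: lattice_vecs_def)
  have F: "shear d i W v = v + v i *\<^sub>R W" if "v \<in> V" for v
    using that lat vec W by (auto intro!: shear_eq)
  have "W \<in> vecs d" "- W \<in> vecs d" using vec[OF W] by (auto simp: vecs_def)
  moreover have "v + v i *\<^sub>R W \<in> vecs d" if "v \<in> V" for v
    using that lat vec \<open>W \<in> vecs d\<close> by (auto simp: vecs_def)
  ultimately have GF: "\<forall>v\<in>V. shear d i' (- W) (shear d i W v) = v"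
    using inv by (simp add: F shear_eq)
  have "shear d i W ` V = (\<lambda>v. v + v i *\<^sub>R W) ` V" using F by (rule image_cong[OF refl])
  then show ?thesis
    using unimod_equiv_if_int_affine_inverse[OF fin ne lat shear_int_affine_map[OF i(1) int(1)]
        shear_int_affine_map[OF i(2) int(2)] GF] by simp
qed

section \<open>Vertices of matching field polytopes\<close>

definition coord :: "nat \<Rightarrow> nat \<Rightarrow> nat \<Rightarrow> nat" where
  "coord n r c = (r - 1) * n + (c - 1)"

lemma emat_eq: "emat n r c = (\<lambda>x. if x = coord n r c then 1 else 0)"
  by (simp add: emat_def coord_def)

lemma coord_less:
  assumes "r \<le> 3" "1 \<le> c" "c \<le> n"
  shows "coord n r c < 3 * n"
proof -
  have "(r - 1) * n \<le> 2 * n" using assms(1) by (intro mult_le_mono1) simp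
  then show ?thesis unfolding coord_def using assms(2,3) by linarith
qed

lemma coord_eq_iff:
  assumes "1 \<le> c" "c \<le> n" "1 \<le> c'" "c' \<le> n" "1 \<le> r" "1 \<le> r'"
  shows "coord n r c = coord n r' c' \<longleftrightarrow> r = r' \<and> c = c'"
proof
  assume eq: "coord n r c = coord n r' c'"
  have div_mod: "coord n r c div n = r - 1" "coord n r c mod n = c - 1" if "1 \<le> c" "c \<le> n" for r c
  proof -
    have "c - 1 < n" "0 < n" using that by simp_all
    then show "coord n r c div n = r - 1" "coord n r c mod n = c - 1"
      unfolding coord_def by (simp_all add: add.commute[of "(r - 1) * n"] div_mult_self2 del: div_mult_self1)
  qed
  have "r - 1 = r' - 1" "c - 1 = c' - 1"
    using div_mod[of c r] div_mod[of c' r'] eq assms by metis+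
  then show "r = r' \<and> c = c'" using assms by linarith
qed simp

lemma emat_lattice_vecs:
  assumes "r \<le> 3" "1 \<le> c" "c \<le> n"
  shows "emat n r c \<in> lattice_vecs (3 * n)"
  using coord_less[OF assms] unfolding lattice_vecs_def vecs_def emat_eq by auto

definition vertex :: "nat \<Rightarrow> nat \<times> nat \<times> nat \<Rightarrow> (nat \<Rightarrow> real)" where
  "vertex n = (\<lambda>(a, b, c). emat n 1 a + emat n 2 b + emat n 3 c)"

lemma vertex_coord:
  assumes "1 \<le> a" "a \<le> n" "1 \<le> b" "b \<le> n" "1 \<le> c" "c \<le> n" "1 \<le> x" "x \<le> n"
  shows "vertex n (a, b, c) (coord n 1 x) = (if a = x then 1 else 0)"
    and "vertex n (a, b, c) (coord n 2 x) = (if b = x then 1 else 0)"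
    and "vertex n (a, b, c) (coord n 3 x) = (if c = x then 1 else 0)"
  using assms by (auto simp: vertex_def emat_eq coord_eq_iff)

lemma vertex_lattice_vecs:
  assumes "1 \<le> a" "a \<le> n" "1 \<le> b" "b \<le> n" "1 \<le> c" "c \<le> n"
  shows "vertex n (a, b, c) \<in> lattice_vecs (3 * n)"
  unfolding vertex_def using assms by (auto intro!: lattice_vecs_add emat_lattice_vecs)

definition block_triples :: "nat \<Rightarrow> nat \<Rightarrow> (nat \<times> nat \<times> nat) set" where
  "block_triples n l = (\<lambda>(a, b, c). if card ({a, b, c} \<inter> {1..l}) = 1 then (b, a, c) else (a, b, c)) `
     {(a, b, c). 1 \<le> a \<and> a < b \<and> b < c \<and> c \<le> n}"

lemma mf_polytope_block_diag: "mf_polytope n (block_diag l) = convex hull (vertex n ` block_triples n l)"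
proof -
  define h :: "nat \<times> nat \<times> nat \<Rightarrow> nat \<times> nat \<times> nat"
    where "h = (\<lambda>(a, b, c). if card ({a, b, c} \<inter> {1..l}) = 1 then (b, a, c) else (a, b, c))"
  have vertex_h: "mf_vertex n (block_diag l {a, b, c}) a b c = vertex n (h (a, b, c))" for a b c
    by (simp add: h_def block_diag_def mf_vertex_def vertex_def swap12_def fun_eq_iff)
  have "{mf_vertex n (block_diag l {a, b, c}) a b c | a b c. 1 \<le> a \<and> a < b \<and> b < c \<and> c \<le> n}
      = vertex n ` h ` {(a, b, c). 1 \<le> a \<and> a < b \<and> b < c \<and> c \<le> n}"
  proof (intro equalityI subsetI)
    fix x assume "x \<in> {mf_vertex n (block_diag l {a, b, c}) a b c | a b c. 1 \<le> a \<and> a < b \<and> b < c \<and> c \<le> n}"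
    then obtain a b c where "x = vertex n (h (a, b, c))" "1 \<le> a \<and> a < b \<and> b < c \<and> c \<le> n"
      unfolding vertex_h by blast
    then show "x \<in> vertex n ` h ` {(a, b, c). 1 \<le> a \<and> a < b \<and> b < c \<and> c \<le> n}" by blast
  next
    fix x assume "x \<in> vertex n ` h ` {(a, b, c). 1 \<le> a \<and> a < b \<and> b < c \<and> c \<le> n}"
    then obtain a b c where "x = vertex n (h (a, b, c))" "1 \<le> a \<and> a < b \<and> b < c \<and> c \<le> n"
      by blast
    then show "x \<in> {mf_vertex n (block_diag l {a, b, c}) a b c | a b c. 1 \<le> a \<and> a < b \<and> b < c \<and> c \<le> n}"
      unfolding vertex_h by blast
  qed
  then show ?thesis unfolding mf_polytope_def conv_hull_eq_convex_hull block_triples_def h_def by simp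
qed

text \<open>The vertices of the intermediate polytopes between P_{B_1} and P_{B_2}: stage j arises
  from the vertex triples of P_{B_1} (stage 3) by flipping (2, b, c) to (b, 2, c) for 3 \<le> b < j.\<close>
definition stage_triples :: "nat \<Rightarrow> nat \<Rightarrow> (nat \<times> nat \<times> nat) set" where
  "stage_triples n j = {(a, b, c).
     (a = 2 \<and> b = 1 \<and> 3 \<le> c \<and> c \<le> n) \<or>
     (3 \<le> a \<and> b = 1 \<and> a < c \<and> c \<le> n) \<or>
     (3 \<le> a \<and> a < j \<and> b = 2 \<and> a < c \<and> c \<le> n) \<or>
     (a = 2 \<and> 3 \<le> b \<and> j \<le> b \<and> b < c \<and> c \<le> n) \<or>
     (3 \<le> a \<and> a < b \<and> b < c \<and> c \<le> n)}"

definition flip_triple :: "nat \<Rightarrow> nat \<times> nat \<times> nat \<Rightarrow> nat \<times> nat \<times> nat" where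
  "flip_triple j = (\<lambda>(a, b, c). if a = 2 \<and> b = j then (j, 2, c) else (a, b, c))"

lemma card_triple_inter_1:
  fixes a b c :: nat
  assumes "1 \<le> a" "a < b" "b < c"
  shows "card ({a, b, c} \<inter> {1..1}) = 1 \<longleftrightarrow> a = 1"
proof -
  have "{a, b, c} \<inter> {1..1} = (if a = 1 then {1} else {})" using assms by auto
  then show ?thesis by simp
qed

lemma card_triple_inter_2:
  fixes a b c :: nat
  assumes "1 \<le> a" "a < b" "b < c"
  shows "card ({a, b, c} \<inter> {1..2}) = 1 \<longleftrightarrow> a = 1 \<and> b \<noteq> 2 \<or> a = 2"
proof -
  have "{a, b, c} \<inter> {1..2} = (if a = 1 \<and> b = 2 then {1, 2} else if a = 1 then {1} else if a = 2 then {2} else {})"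
    using assms by auto
  then show ?thesis by simp
qed

lemma block_triples_eq_image:
  assumes "\<And>a b c. 1 \<le> a \<Longrightarrow> a < b \<Longrightarrow> b < c \<Longrightarrow> card ({a, b, c} \<inter> {1..l}) = 1 \<longleftrightarrow> P a b"
  shows "block_triples n l = (\<lambda>(a, b, c). if P a b then (b, a, c) else (a, b, c)) `
    {(a, b, c). 1 \<le> a \<and> a < b \<and> b < c \<and> c \<le> n}"
  unfolding block_triples_def
proof (rule image_cong[OF refl])
  fix t assume "t \<in> {(a, b, c). 1 \<le> a \<and> a < b \<and> b < c \<and> c \<le> n}"
  then obtain a b c where "t = (a, b, c)" "1 \<le> a" "a < b" "b < c" by auto
  then show "(\<lambda>(a, b, c). if card ({a, b, c} \<inter> {1..l}) = 1 then (b, a, c) else (a, b, c)) t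
      = (\<lambda>(a, b, c). if P a b then (b, a, c) else (a, b, c)) t"
    using assms by simp
qed

lemma block_triples_1: "block_triples n 1 = stage_triples n 3"
proof -
  define g :: "nat \<times> nat \<times> nat \<Rightarrow> nat \<times> nat \<times> nat"
    where "g = (\<lambda>(a, b, c). if a = 1 then (b, a, c) else (a, b, c))"
  define I where "I = {(a, b, c). 1 \<le> a \<and> a < b \<and> b < c \<and> c \<le> (n::nat)}"
  have "block_triples n 1 = g ` I"
    unfolding g_def I_def by (rule block_triples_eq_image[OF card_triple_inter_1])
  also have "g ` I = stage_triples n 3"
  proof (intro equalityI subsetI)
    fix t assume "t \<in> g ` I"
    then obtain a b c where t: "t = g (a, b, c)" and abc: "1 \<le> a" "a < b" "b < c" "c \<le> n"
      by (auto simp: I_def)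
    show "t \<in> stage_triples n 3"
    proof (cases "a = 1")
      case True
      then show ?thesis using t abc by (auto simp: g_def stage_triples_def)
    next
      case False
      then show ?thesis using t abc by (auto simp: g_def stage_triples_def)
    qed
  next
    fix t assume "t \<in> stage_triples n 3"
    then obtain a b c where t: "t = (a, b, c)" and abc: "(a, b, c) \<in> stage_triples n 3" by (cases t) auto
    show "t \<in> g ` I"
    proof (cases "b = 1")
      case True
      then have "t = g (1, a, c)" "(1, a, c) \<in> I" using abc t by (auto simp: g_def I_def stage_triples_def)
      then show ?thesis by blast
    next
      case False
      then have "t = g (a, b, c)" "(a, b, c) \<in> I" using abc t by (auto simp: g_def I_def stage_triples_def)
      then show ?thesis by blast
    qed
  qed
  finally show ?thesis .
qed

lemma block_triples_2: "block_triples n 2 = flip_triple 1 ` stage_triples n n"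
proof -
  define g :: "nat \<times> nat \<times> nat \<Rightarrow> nat \<times> nat \<times> nat"
    where "g = (\<lambda>(a, b, c). if a = 1 \<and> b \<noteq> 2 \<or> a = 2 then (b, a, c) else (a, b, c))"
  define I where "I = {(a, b, c). 1 \<le> a \<and> a < b \<and> b < c \<and> c \<le> (n::nat)}"
  have "block_triples n 2 = g ` I"
    unfolding g_def I_def by (rule block_triples_eq_image[OF card_triple_inter_2])
  also have "g ` I = flip_triple 1 ` stage_triples n n"
  proof (intro equalityI subsetI)
    fix t assume "t \<in> g ` I"
    then obtain a b c where t: "t = g (a, b, c)" and abc: "1 \<le> a" "a < b" "b < c" "c \<le> n"
      by (auto simp: I_def)
    show "t \<in> flip_triple 1 ` stage_triples n n"
    proof (cases "a = 1 \<and> b = 2")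
      case True
      then have "t = flip_triple 1 (2, 1, c)" "(2, 1, c) \<in> stage_triples n n"
        using t abc by (auto simp: g_def flip_triple_def stage_triples_def)
      then show ?thesis by blast
    next
      case False
      then have "t = flip_triple 1 t" "t \<in> stage_triples n n"
        using t abc by (auto simp: g_def flip_triple_def stage_triples_def)
      then show ?thesis by blast
    qed
  next
    fix t assume "t \<in> flip_triple 1 ` stage_triples n n"
    then obtain a b c where t: "t = flip_triple 1 (a, b, c)" and abc: "(a, b, c) \<in> stage_triples n n"
      by auto
    consider "a = 2 \<and> b = 1" | "3 \<le> a \<and> b \<le> 2" | "a < b" using abc by (auto simp: stage_triples_def)
    then show "t \<in> g ` I"
    proof cases
      case 1
      then have "t = g (1, 2, c)" "(1, 2, c) \<in> I"
        using t abc by (auto simp: g_def flip_triple_def stage_triples_def I_def)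
      then show ?thesis by blast
    next
      case 2
      then have "t = g (b, a, c)" "(b, a, c) \<in> I"
        using t abc by (auto simp: g_def flip_triple_def stage_triples_def I_def)
      then show ?thesis by blast
    next
      case 3
      then have "t = g (a, b, c)" "(a, b, c) \<in> I"
        using t abc by (auto simp: g_def flip_triple_def stage_triples_def I_def)
      then show ?thesis by blast
    qed
  qed
  finally show ?thesis .
qed

lemma stage_triples_Suc:
  assumes "3 \<le> j"
  shows "stage_triples n (Suc j) = flip_triple j ` stage_triples n j"
proof (intro equalityI subsetI)
  fix t assume t: "t \<in> stage_triples n (Suc j)"
  obtain a b c where abc: "t = (a, b, c)" by (cases t)
  show "t \<in> flip_triple j ` stage_triples n j"
  proof (cases "a = j \<and> b = 2")
    case True
    then show ?thesis using t abc assms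
      by (intro image_eqI[of _ _ "(2, j, c)"]) (auto simp: stage_triples_def flip_triple_def)
  next
    case False
    then show ?thesis using t abc assms
      by (intro image_eqI[of _ _ t]) (auto simp: stage_triples_def flip_triple_def)
  qed
next
  fix t assume "t \<in> flip_triple j ` stage_triples n j"
  then obtain a b c where t: "t = flip_triple j (a, b, c)" and abc: "(a, b, c) \<in> stage_triples n j"
    by auto
  show "t \<in> stage_triples n (Suc j)"
  proof (cases "a = 2 \<and> b = j")
    case True
    then show ?thesis using t abc assms by (simp add: stage_triples_def flip_triple_def)
  next
    case False
    then show ?thesis using t abc assms by (auto simp: stage_triples_def flip_triple_def)
  qed
qed

lemma stage_triples_range:
  "(a, b, c) \<in> stage_triples n j \<Longrightarrow> 2 \<le> a \<and> a < n \<and> 1 \<le> b \<and> b < n \<and> 3 \<le> c \<and> c \<le> n \<and> b \<noteq> a"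
  unfolding stage_triples_def by auto

lemma finite_stage_triples: "finite (stage_triples n j)"
proof -
  have "stage_triples n j \<subseteq> {..n} \<times> {..n} \<times> {..n}"
    using stage_triples_range by fastforce
  then show ?thesis by (rule finite_subset) simp
qed

lemma stage_triples_nonempty: "3 \<le> n \<Longrightarrow> (2, 1, n) \<in> stage_triples n j"
  by (simp add: stage_triples_def)

lemma vertex_stage_lattice_vecs: "t \<in> stage_triples n j \<Longrightarrow> vertex n t \<in> lattice_vecs (3 * n)"
  by (cases t) (auto dest!: stage_triples_range intro!: vertex_lattice_vecs)

definition flip_vec :: "nat \<Rightarrow> nat \<Rightarrow> (nat \<Rightarrow> real)" where
  "flip_vec n j = emat n 1 j - emat n 2 j + emat n 2 2 - emat n 1 2"

lemma vertex_add_flip_vec: "vertex n (2, j, c) + flip_vec n j = vertex n (j, 2, c)"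
  by (simp add: fun_eq_iff vertex_def flip_vec_def algebra_simps)

lemma flip_vec_lattice_vecs: "1 \<le> j \<Longrightarrow> j \<le> n \<Longrightarrow> 2 \<le> n \<Longrightarrow> flip_vec n j \<in> lattice_vecs (3 * n)"
  unfolding flip_vec_def by (intro lattice_vecs_add lattice_vecs_diff emat_lattice_vecs) auto

lemma unimod_equiv_flip:
  assumes fin: "finite X" and ne: "X \<noteq> {}" and lat: "vertex n ` X \<subseteq> lattice_vecs (3 * n)"
    and j: "1 \<le> j" "j \<le> n" "2 \<le> n" and i: "i < 3 * n" "i' < 3 * n"
    and detect: "\<And>a b c. (a, b, c) \<in> X \<Longrightarrow> vertex n (a, b, c) i = (if a = 2 \<and> b = j then 1 else 0)"
    and detect': "\<And>a b c. (a, b, c) \<in> X \<Longrightarrow>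
      vertex n (flip_triple j (a, b, c)) i' = (if a = 2 \<and> b = j then 1 else 0)"
  shows "unimod_equiv (3 * n) (convex hull (vertex n ` X)) (3 * n) (convex hull (vertex n ` flip_triple j ` X))"
proof -
  let ?W = "flip_vec n j"
  have moved: "vertex n t + vertex n t i *\<^sub>R ?W = vertex n (flip_triple j t)" if "t \<in> X" for t
  proof -
    obtain a b c where t: "t = (a, b, c)" by (cases t)
    show ?thesis
      using detect[of a b c] that vertex_add_flip_vec[of n j c] by (simp add: t flip_triple_def)
  qed
  have "(\<lambda>v. v + v i *\<^sub>R ?W) ` vertex n ` X = vertex n ` flip_triple j ` X"
    unfolding image_image using moved by (rule image_cong[OF refl])
  moreover have "\<forall>v\<in>vertex n ` X. (v + v i *\<^sub>R ?W) i' = v i"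
  proof
    fix v assume "v \<in> vertex n ` X"
    then obtain a b c where abc: "(a, b, c) \<in> X" and v: "v = vertex n (a, b, c)" by auto
    show "(v + v i *\<^sub>R ?W) i' = v i"
      using moved[OF abc] detect[OF abc] detect'[OF abc] by (simp add: v)
  qed
  ultimately show ?thesis
    using unimod_equiv_shear[OF finite_imageI[OF fin] _ lat flip_vec_lattice_vecs[OF j] i] ne by simp
qed

lemma unimod_equiv_stage_3_4:
  assumes n: "4 \<le> n"
  shows "unimod_equiv (3 * n) (convex hull (vertex n ` stage_triples n 3))
    (3 * n) (convex hull (vertex n ` stage_triples n 4))"
proof -
  have "unimod_equiv (3 * n) (convex hull (vertex n ` stage_triples n 3))
      (3 * n) (convex hull (vertex n ` flip_triple 3 ` stage_triples n 3))"
  proof (rule unimod_equiv_flip[where i = "coord n 2 3" and i' = "coord n 2 2"])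
    fix a b c assume abc: "(a, b, c) \<in> stage_triples n 3"
    have range: "1 \<le> a" "a \<le> n" "1 \<le> b" "b \<le> n" "1 \<le> c" "c \<le> n"
      using stage_triples_range[OF abc] by auto
    have "b = 3 \<Longrightarrow> a = 2" "b \<noteq> 2" using abc by (auto simp: stage_triples_def)
    then show "vertex n (a, b, c) (coord n 2 3) = (if a = 2 \<and> b = 3 then 1 else 0)"
      "vertex n (flip_triple 3 (a, b, c)) (coord n 2 2) = (if a = 2 \<and> b = 3 then 1 else 0)"
      using range n by (auto simp: flip_triple_def vertex_coord)
  qed (use n finite_stage_triples stage_triples_nonempty[of n 3] vertex_stage_lattice_vecs in
      \<open>auto intro: coord_less\<close>)
  then show ?thesis using stage_triples_Suc[of 3 n] by (simp add: numeral_eq_Suc)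
qed

lemma unimod_equiv_flip_last_stage:
  assumes n: "3 \<le> n"
  shows "unimod_equiv (3 * n) (convex hull (vertex n ` stage_triples n n))
    (3 * n) (convex hull (vertex n ` flip_triple 1 ` stage_triples n n))"
proof (rule unimod_equiv_flip[where i = "coord n 1 2" and i' = "coord n 1 1"])
  fix a b c assume abc: "(a, b, c) \<in> stage_triples n n"
  have range: "2 \<le> a" "a \<le> n" "1 \<le> b" "b \<le> n" "1 \<le> c" "c \<le> n"
    using stage_triples_range[OF abc] by auto
  have "a = 2 \<Longrightarrow> b = 1" using abc by (auto simp: stage_triples_def)
  moreover have "vertex n (a, b, c) (coord n 1 2) = (if a = 2 then 1 else 0)"
    "vertex n (a, b, c) (coord n 1 1) = 0" "vertex n (1, 2, c) (coord n 1 1) = 1"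
    using range n by (subst vertex_coord; auto)+
  ultimately show "vertex n (a, b, c) (coord n 1 2) = (if a = 2 \<and> b = 1 then 1 else 0)"
    "vertex n (flip_triple 1 (a, b, c)) (coord n 1 1) = (if a = 2 \<and> b = 1 then 1 else 0)"
    by (auto simp: flip_triple_def)
qed (use n finite_stage_triples stage_triples_nonempty[of n n] vertex_stage_lattice_vecs in
    \<open>auto intro: coord_less\<close>)

section \<open>Reduction to full dimension\<close>

definition reduced_dim :: "nat \<Rightarrow> nat" where
  "reduced_dim n = 3 * (n - 3)"

text \<open>The coordinates kept in the reduced space are the entries (r, c) with 3 \<le> c < n, except
  that in row 2 the column 3 is replaced by column 2 (shift_col swaps the two). Position
  i < 3(n - 3) stands for row i div (n - 3) + 1 and shifted column i mod (n - 3) + 3.\<close>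
definition shift_col :: "nat \<Rightarrow> nat \<Rightarrow> nat" where
  "shift_col r c = (if r = 2 \<and> c = 2 then 3 else if r = 2 \<and> c = 3 then 2 else c)"

definition kept_entry :: "nat \<Rightarrow> nat \<Rightarrow> nat \<Rightarrow> bool" where
  "kept_entry n r c \<longleftrightarrow> 1 \<le> r \<and> r \<le> 3 \<and> 3 \<le> shift_col r c \<and> shift_col r c < n"

definition entry_pos :: "nat \<Rightarrow> nat \<Rightarrow> nat \<Rightarrow> nat" where
  "entry_pos n r c = (r - 1) * (n - 3) + (shift_col r c - 3)"

definition pos_row :: "nat \<Rightarrow> nat \<Rightarrow> nat" where
  "pos_row n i = i div (n - 3) + 1"

definition pos_col :: "nat \<Rightarrow> nat \<Rightarrow> nat" where
  "pos_col n i = shift_col (pos_row n i) (i mod (n - 3) + 3)"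

definition pos_coord :: "nat \<Rightarrow> nat \<Rightarrow> nat" where
  "pos_coord n i = coord n (pos_row n i) (pos_col n i)"

lemma shift_col_shift_col [simp]: "shift_col r (shift_col r c) = c"
  by (simp add: shift_col_def)

lemma kept_entry_range: "kept_entry n r c \<Longrightarrow> 1 \<le> r \<and> r \<le> 3 \<and> 2 \<le> c \<and> c < n"
  by (auto simp: kept_entry_def shift_col_def split: if_splits)

lemma entry_pos_kept:
  assumes "kept_entry n r c"
  shows "entry_pos n r c < reduced_dim n" "pos_row n (entry_pos n r c) = r" "pos_col n (entry_pos n r c) = c"
proof -
  define m s where "m = n - 3" and "s = shift_col r c - 3"
  have s: "s < m" "shift_col r c = s + 3" using assms by (auto simp: kept_entry_def m_def s_def)
  have r: "1 \<le> r" "r \<le> 3" using assms by (auto simp: kept_entry_def)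
  have pos: "entry_pos n r c = (r - 1) * m + s" by (simp add: entry_pos_def m_def s_def)
  have "(r - 1) * m + s < (r - 1) * m + m" using s by simp
  also have "\<dots> = r * m" using r by (cases r) auto
  also have "\<dots> \<le> 3 * m" using r by simp
  finally show "entry_pos n r c < reduced_dim n" by (simp add: pos reduced_dim_def m_def)
  have "((r - 1) * m + s) div m = r - 1" "((r - 1) * m + s) mod m = s" using s(1) by simp_all
  then show "pos_row n (entry_pos n r c) = r" "pos_col n (entry_pos n r c) = c"
    using r s(2) by (simp_all add: pos pos_row_def pos_col_def flip: m_def) (metis shift_col_shift_col)
qed

lemma pos_kept_entry:
  assumes "i < reduced_dim n"
  shows "kept_entry n (pos_row n i) (pos_col n i)" "entry_pos n (pos_row n i) (pos_col n i) = i"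
proof -
  define m where "m = n - 3"
  have m: "0 < m" "i div m < 3" "i mod m < m"
    using assms by (auto simp: reduced_dim_def m_def less_mult_imp_div_less)
  have "shift_col (pos_row n i) (pos_col n i) = i mod m + 3" by (simp add: pos_col_def m_def)
  moreover have "m + 3 = n" using m(1) by (simp add: m_def)
  ultimately show "kept_entry n (pos_row n i) (pos_col n i)" "entry_pos n (pos_row n i) (pos_col n i) = i"
    using m by (auto simp: kept_entry_def entry_pos_def pos_row_def m_def[symmetric])
qed

lemma pos_coord_less:
  assumes "i < reduced_dim n"
  shows "pos_coord n i < 3 * n"
  using kept_entry_range[OF pos_kept_entry(1)[OF assms]] unfolding pos_coord_def by (intro coord_less) auto

lemma pos_coord_eq_coord_iff:
  assumes i: "i < reduced_dim n" and rc: "1 \<le> r" "1 \<le> c" "c \<le> n"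
  shows "pos_coord n i = coord n r c \<longleftrightarrow> kept_entry n r c \<and> i = entry_pos n r c"
proof
  assume "pos_coord n i = coord n r c"
  then have "pos_row n i = r \<and> pos_col n i = c"
    using kept_entry_range[OF pos_kept_entry(1)[OF i]] rc unfolding pos_coord_def
    by (subst (asm) coord_eq_iff) auto
  then show "kept_entry n r c \<and> i = entry_pos n r c" using pos_kept_entry[OF i] by auto
qed (auto simp: pos_coord_def entry_pos_kept)

definition unit_vec :: "nat \<Rightarrow> (nat \<Rightarrow> real)" where
  "unit_vec p = (\<lambda>i. if i = p then 1 else 0)"

definition reduce :: "nat \<Rightarrow> (nat \<Rightarrow> real) \<Rightarrow> (nat \<Rightarrow> real)" where
  "reduce n x = (\<lambda>i. if i < reduced_dim n then x (pos_coord n i) else 0)"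

lemma reduce_add [simp]: "reduce n (x + y) = reduce n x + reduce n y"
  and reduce_diff [simp]: "reduce n (x - y) = reduce n x - reduce n y"
  by (simp_all add: reduce_def fun_eq_iff)

lemma reduce_emat:
  assumes "1 \<le> r" "1 \<le> c" "c \<le> n"
  shows "reduce n (emat n r c) = (if kept_entry n r c then unit_vec (entry_pos n r c) else 0)"
  using pos_coord_eq_coord_iff[OF _ assms] entry_pos_kept(1)
  by (auto simp: fun_eq_iff reduce_def emat_eq unit_vec_def)

lemma reduce_int_affine_map: "int_affine_map (3 * n) (reduced_dim n) (reduce n)"
  unfolding int_affine_map_def
proof (intro exI conjI allI)
  define A where "A i a = (if a = pos_coord n i then 1 else 0 :: real)" for i a
  show "A i a \<in> \<int>" for i a by (simp add: A_def)
  show "(0::real) \<in> \<int>" by simp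
  show "reduce n x = (\<lambda>i. if i < reduced_dim n then 0 + (\<Sum>a<3 * n. A i a * x a) else 0)" for x
  proof
    fix i
    have "(\<Sum>a<3 * n. A i a * x a) = (\<Sum>a<3 * n. if a = pos_coord n i then x a else 0)"
      by (rule sum.cong) (auto simp: A_def)
    then show "reduce n x i = (if i < reduced_dim n then 0 + (\<Sum>a<3 * n. A i a * x a) else 0)"
      using pos_coord_less[of i n] by (simp add: reduce_def sum.delta')
  qed
qed

definition dropped_col :: "nat \<Rightarrow> nat \<Rightarrow> nat" where
  "dropped_col n r = (if r = 1 then 2 else if r = 2 then 1 else n)"

definition lift_dir :: "nat \<Rightarrow> nat \<Rightarrow> (nat \<Rightarrow> real)" where
  "lift_dir n i = emat n (pos_row n i) (pos_col n i) - emat n (pos_row n i) (dropped_col n (pos_row n i))"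

text \<open>Every row of a vertex has a single one, so on vertices whose ones sit in kept entries or
  in the dropped columns the dropped entries are determined by the kept ones.\<close>
definition unreduce :: "nat \<Rightarrow> (nat \<Rightarrow> real) \<Rightarrow> (nat \<Rightarrow> real)" where
  "unreduce n y = (\<lambda>a. if a < 3 * n then vertex n (2, 1, n) a + (\<Sum>i<reduced_dim n. lift_dir n i a * y i) else 0)"

definition reducible :: "nat \<Rightarrow> nat \<times> nat \<times> nat \<Rightarrow> bool" where
  "reducible n = (\<lambda>(a, b, c). (a = dropped_col n 1 \<or> kept_entry n 1 a) \<and>
     (b = dropped_col n 2 \<or> kept_entry n 2 b) \<and> (c = dropped_col n 3 \<or> kept_entry n 3 c))"

lemma unreduce_int_affine_map: "int_affine_map (reduced_dim n) (3 * n) (unreduce n)"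
  unfolding int_affine_map_def unreduce_def
  by (intro exI[of _ "\<lambda>a i. lift_dir n i a"] exI[of _ "vertex n (2, 1, n)"])
    (auto simp: lift_dir_def emat_def vertex_def)

lemma lift_dir_lattice_vecs:
  assumes "2 \<le> n" "i < reduced_dim n"
  shows "lift_dir n i \<in> lattice_vecs (3 * n)"
  using kept_entry_range[OF pos_kept_entry(1)[OF assms(2)]] assms(1) unfolding lift_dir_def
  by (intro lattice_vecs_diff emat_lattice_vecs) (auto simp: dropped_col_def)

lemma unreduce_eq:
  assumes "2 \<le> n"
  shows "unreduce n y = vertex n (2, 1, n) + (\<Sum>i<reduced_dim n. y i *\<^sub>R lift_dir n i)"
proof
  fix a
  have "vertex n (2, 1, n) a = 0 \<and> (\<forall>i<reduced_dim n. lift_dir n i a = 0)" if "3 * n \<le> a"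
    using that vertex_lattice_vecs[of 2 n 1 n] lift_dir_lattice_vecs[OF assms] assms
    by (auto simp: lattice_vecs_def vecs_def)
  then show "unreduce n y a = (vertex n (2, 1, n) + (\<Sum>i<reduced_dim n. y i *\<^sub>R lift_dir n i)) a"
    by (auto simp: unreduce_def sum_fun_apply mult.commute)
qed

lemma sum_unit_vec_scaleR:
  fixes v :: "nat \<Rightarrow> 'a::real_vector"
  assumes "p < d"
  shows "(\<Sum>i<d. unit_vec p i *\<^sub>R v i) = v p"
proof -
  have "(\<Sum>i<d. unit_vec p i *\<^sub>R v i) = (\<Sum>i<d. if i = p then v i else 0)"
    by (rule sum.cong) (auto simp: unit_vec_def)
  then show ?thesis using assms by (simp add: sum.delta')
qed

lemma reduce_at_entry_pos: "kept_entry n r c \<Longrightarrow> reduce n x (entry_pos n r c) = x (coord n r c)"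
  by (simp add: reduce_def entry_pos_kept pos_coord_def)

lemma unreduce_row:
  assumes "1 \<le> r" "r \<le> 3" "1 \<le> c" "c \<le> n" "c = dropped_col n r \<or> kept_entry n r c"
  shows "emat n r (dropped_col n r) + (\<Sum>i<reduced_dim n. reduce n (emat n r c) i *\<^sub>R lift_dir n i) = emat n r c"
proof (cases "kept_entry n r c")
  case True
  have "(\<Sum>i<reduced_dim n. unit_vec (entry_pos n r c) i *\<^sub>R lift_dir n i) = lift_dir n (entry_pos n r c)"
    using entry_pos_kept(1)[OF True] by (rule sum_unit_vec_scaleR)
  then show ?thesis
    using True assms entry_pos_kept[OF True] by (simp add: reduce_emat lift_dir_def)
next
  case False
  then show ?thesis using assms by (simp add: reduce_emat)
qed

lemma unreduce_reduce_vertex: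
  assumes n: "2 \<le> n" and range: "1 \<le> a" "a \<le> n" "1 \<le> b" "b \<le> n" "1 \<le> c" "c \<le> n"
    and red: "reducible n (a, b, c)"
  shows "unreduce n (reduce n (vertex n (a, b, c))) = vertex n (a, b, c)"
proof -
  let ?S = "\<lambda>y. \<Sum>i<reduced_dim n. y i *\<^sub>R lift_dir n i"
  have S_add: "?S (y + z) = ?S y + ?S z" for y z by (simp add: scaleR_add_left sum.distrib)
  have base: "vertex n (2, 1, n) = emat n 1 (dropped_col n 1) + emat n 2 (dropped_col n 2) + emat n 3 (dropped_col n 3)"
    by (simp add: vertex_def dropped_col_def)
  have "unreduce n (reduce n (vertex n (a, b, c)))
      = (emat n 1 (dropped_col n 1) + ?S (reduce n (emat n 1 a)))
      + (emat n 2 (dropped_col n 2) + ?S (reduce n (emat n 2 b)))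
      + (emat n 3 (dropped_col n 3) + ?S (reduce n (emat n 3 c)))"
    unfolding unreduce_eq[OF n] base by (simp only: vertex_def case_prod_conv reduce_add S_add add_ac)
  also have "\<dots> = vertex n (a, b, c)"
    using red range by (simp add: unreduce_row reducible_def vertex_def)
  finally show ?thesis .
qed

lemma stage_triples_reducible:
  assumes "4 \<le> j" "t \<in> stage_triples n j"
  shows "reducible n t"
  using assms by (auto simp: stage_triples_def reducible_def kept_entry_def shift_col_def dropped_col_def)

definition reduced_stage :: "nat \<Rightarrow> nat \<Rightarrow> (nat \<Rightarrow> real) set" where
  "reduced_stage n j = reduce n ` vertex n ` stage_triples n j"

lemma unreduce_reduce_stage:
  assumes "4 \<le> j" "t \<in> stage_triples n j"
  shows "unreduce n (reduce n (vertex n t)) = vertex n t"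
proof -
  obtain a b c where t: "t = (a, b, c)" by (cases t)
  show ?thesis
    using stage_triples_range[of a b c n j] stage_triples_reducible[OF assms] assms(2)
    by (auto simp: t intro!: unreduce_reduce_vertex)
qed

lemma reduced_stage_lattice_vecs: "reduced_stage n j \<subseteq> lattice_vecs (reduced_dim n)"
  using int_affine_map_lattice_vecs[OF reduce_int_affine_map] vertex_stage_lattice_vecs
  by (auto simp: reduced_stage_def)

lemma unimod_equiv_reduced_stage:
  assumes j: "4 \<le> j" and n: "3 \<le> n"
  shows "unimod_equiv (3 * n) (convex hull (vertex n ` stage_triples n j))
      (reduced_dim n) (convex hull (reduced_stage n j))"
    and "unimod_equiv (reduced_dim n) (convex hull (reduced_stage n j))
      (3 * n) (convex hull (vertex n ` stage_triples n j))"
proof -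
  have ne: "stage_triples n j \<noteq> {}" using stage_triples_nonempty[OF n] by blast
  show "unimod_equiv (3 * n) (convex hull (vertex n ` stage_triples n j))
      (reduced_dim n) (convex hull (reduced_stage n j))"
    unfolding reduced_stage_def
    using ne finite_stage_triples vertex_stage_lattice_vecs unreduce_reduce_stage[OF j]
    by (intro unimod_equiv_if_int_affine_inverse[OF _ _ _ reduce_int_affine_map unreduce_int_affine_map]) auto
  have "unreduce n ` reduced_stage n j = vertex n ` stage_triples n j"
    unfolding reduced_stage_def image_image using unreduce_reduce_stage[OF j]
    by (simp cong: image_cong)
  moreover have "unimod_equiv (reduced_dim n) (convex hull (reduced_stage n j))
      (3 * n) (convex hull (unreduce n ` reduced_stage n j))"
    using ne finite_stage_triples reduced_stage_lattice_vecs unreduce_reduce_stage[OF j]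
    by (intro unimod_equiv_if_int_affine_inverse[OF _ _ _ unreduce_int_affine_map reduce_int_affine_map])
      (auto simp: reduced_stage_def)
  ultimately show "unimod_equiv (reduced_dim n) (convex hull (reduced_stage n j))
      (3 * n) (convex hull (vertex n ` stage_triples n j))" by simp
qed

lemma pairing_unit_vec: "p < k \<Longrightarrow> pairing k f (unit_vec p) = f p"
  using sum_unit_vec_scaleR[of p k f] by (simp add: pairing_def mult.commute)

lemma reduce_vertex:
  assumes "1 \<le> a" "a \<le> n" "1 \<le> b" "b \<le> n" "1 \<le> c" "c \<le> n"
  shows "reduce n (vertex n (a, b, c)) = (if kept_entry n 1 a then unit_vec (entry_pos n 1 a) else 0)
    + (if kept_entry n 2 b then unit_vec (entry_pos n 2 b) else 0)
    + (if kept_entry n 3 c then unit_vec (entry_pos n 3 c) else 0)"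
  using assms by (simp add: vertex_def reduce_emat)

lemma reduce_vertex_origin: "reduce n (vertex n (2, 1, n)) = 0"
proof (cases "4 \<le> n")
  case True
  then show ?thesis by (simp add: reduce_vertex kept_entry_def shift_col_def)
next
  case False
  then have "reduced_dim n = 0" by (simp add: reduced_dim_def)
  then show ?thesis by (simp add: reduce_def fun_eq_iff)
qed

lemma unit_vec_in_int_affine_hull_reduced_stage:
  assumes j: "4 \<le> j" "j < n" and p: "p < reduced_dim n"
  shows "unit_vec p \<in> int_affine_hull (reduced_stage n j)"
proof -
  define r c where "r = pos_row n p" and "c = pos_col n p"
  have kept: "kept_entry n r c" and p_eq: "p = entry_pos n r c"
    using pos_kept_entry[OF p] by (simp_all add: r_def c_def)
  have in_hull: "reduce n (vertex n t) \<in> int_affine_hull (reduced_stage n j)" if "t \<in> stage_triples n j" for t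
    using that by (intro int_affine_hull_base) (simp add: reduced_stage_def)
  obtain t t' where t: "t \<in> stage_triples n j" "t' \<in> stage_triples n j"
    and diff: "unit_vec p = reduce n (vertex n t) - reduce n (vertex n t')"
  proof -
    have kept_13: "kept_entry n 1 3" "\<not> kept_entry n 1 2" "\<not> kept_entry n 2 1" "\<not> kept_entry n 3 n"
      using j by (auto simp: kept_entry_def shift_col_def)
    have "r = 1 \<or> r = 3 \<or> r = 2" using kept_entry_range[OF kept] by auto
    then consider "r = 1" | "r = 2" | "r = 3" by blast
    then show thesis
    proof cases
      case 1
      then have "3 \<le> c" "c < n" using kept by (auto simp: kept_entry_def shift_col_def)
      then show thesis using that[of "(c, 1, n)" "(2, 1, n)"] j kept kept_13 1
        by (simp add: stage_triples_def reduce_vertex p_eq reduce_vertex_origin[symmetric])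
    next
      case 3
      then have "3 \<le> c" "c < n" using kept by (auto simp: kept_entry_def shift_col_def)
      then show thesis using that[of "(2, 1, c)" "(2, 1, n)"] j kept kept_13 3
        by (simp add: stage_triples_def reduce_vertex p_eq reduce_vertex_origin[symmetric])
    next
      case 2
      then have "c = 2 \<or> 4 \<le> c \<and> c < n" using kept by (auto simp: kept_entry_def shift_col_def split: if_splits)
      then show thesis using that[of "(3, c, n)" "(3, 1, n)"] j kept kept_13 2
        by (auto simp: stage_triples_def reduce_vertex p_eq)
    qed
  qed
  have "reduce n (vertex n t) - reduce n (vertex n t') + reduce n (vertex n (2, 1, n))
      \<in> int_affine_hull (reduced_stage n j)"
    using t j by (intro int_affine_hull_parallelogram in_hull) (auto simp: stage_triples_def)
  then show ?thesis unfolding reduce_vertex_origin diff by simp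
qed

lemma lattice_vecs_subset_int_affine_hull:
  assumes "0 \<in> int_affine_hull S" "\<And>p. p < d \<Longrightarrow> unit_vec p \<in> int_affine_hull S"
  shows "lattice_vecs d \<subseteq> int_affine_hull S"
proof
  fix x assume x: "x \<in> lattice_vecs d"
  define c y where "c p = (if p < d then x p else 1 - (\<Sum>l<d. x l))"
    and "y p = (if p < d then unit_vec p else 0)" for p
  have "(\<Sum>p<Suc d. c p *\<^sub>R y p) \<in> int_affine_hull S"
    using assms x by (intro int_affine_hull_affine_sum)
      (auto simp: c_def y_def lattice_vecs_def intro!: Ints_diff Ints_sum)
  moreover have "(\<Sum>p<Suc d. c p *\<^sub>R y p) = x"
  proof
    fix l
    have "(\<Sum>p<Suc d. c p *\<^sub>R y p) l = (\<Sum>p<d. unit_vec p l *\<^sub>R x p)"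
      by (simp add: sum_fun_apply c_def y_def unit_vec_def mult.commute)
    also have "\<dots> = (\<Sum>p<d. if p = l then x p else 0)"
      by (rule sum.cong) (auto simp: unit_vec_def)
    also have "\<dots> = x l"
      using x by (simp add: sum.delta' lattice_vecs_def vecs_def)
    finally show "(\<Sum>p<Suc d. c p *\<^sub>R y p) l = x l" .
  qed
  ultimately show "x \<in> int_affine_hull S" by simp
qed

lemma spanned_lattice_reduced_stage:
  assumes j: "4 \<le> j" "j < n"
  shows "spanned_lattice (reduced_dim n) (convex hull (reduced_stage n j)) = lattice_vecs (reduced_dim n)"
proof
  show "spanned_lattice (reduced_dim n) (convex hull (reduced_stage n j)) \<subseteq> lattice_vecs (reduced_dim n)"
    unfolding spanned_lattice_def by (rule int_affine_hull_subset_lattice_vecs) simp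
  have "0 \<in> int_affine_hull (reduced_stage n j)"
    using stage_triples_nonempty[of n j] j reduce_vertex_origin[of n]
    by (intro int_affine_hull_base) (force simp: reduced_stage_def)
  then have "lattice_vecs (reduced_dim n) \<subseteq> int_affine_hull (reduced_stage n j)"
    using unit_vec_in_int_affine_hull_reduced_stage[OF j] by (rule lattice_vecs_subset_int_affine_hull)
  also have "\<dots> \<subseteq> spanned_lattice (reduced_dim n) (convex hull (reduced_stage n j))"
    unfolding spanned_lattice_def using reduced_stage_lattice_vecs hull_subset[of "reduced_stage n j"]
    by (intro int_affine_hull_mono) auto
  finally show "lattice_vecs (reduced_dim n) \<subseteq> spanned_lattice (reduced_dim n) (convex hull (reduced_stage n j))" .
qed

section \<open>The mutation steps\<close>

lemma crossing_midpoints_subset_convex_hull: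
  assumes "\<And>p q. p \<in> V \<Longrightarrow> q \<in> V \<Longrightarrow> L p = 1 \<Longrightarrow> L q = -1 \<Longrightarrow> \<exists>x\<in>W. \<exists>y\<in>W. p + q = x + y"
  shows "crossing_midpoints L V \<subseteq> convex hull W"
proof
  fix z assume "z \<in> crossing_midpoints L V"
  then obtain p q where z: "z = (1/2) *\<^sub>R (p + q)" and pq: "p \<in> V" "q \<in> V" "L p = 1" "L q = -1"
    unfolding crossing_midpoints_def by blast
  then obtain x y where "x \<in> W" "y \<in> W" "p + q = x + y" using assms by blast
  then show "z \<in> convex hull W" by (simp add: z midpoint_in_convex_hull)
qed

definition level_weight :: "nat \<Rightarrow> nat \<Rightarrow> nat \<Rightarrow> real" where
  "level_weight j r c =
     (if r = 1 \<and> 3 \<le> c \<and> c < j then 1 else if r = 2 \<and> (c = 2 \<or> 4 \<le> c \<and> c \<le> j) then -1 else 0)"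

definition level_form :: "nat \<Rightarrow> nat \<Rightarrow> (nat \<Rightarrow> real)" where
  "level_form n j = (\<lambda>i. if i < reduced_dim n then level_weight j (pos_row n i) (pos_col n i) else 0)"

definition triple_level :: "nat \<Rightarrow> nat \<times> nat \<times> nat \<Rightarrow> real" where
  "triple_level j = (\<lambda>(a, b, c). level_weight j 1 a + level_weight j 2 b)"

lemma level_form_lattice_vecs: "level_form n j \<in> lattice_vecs (reduced_dim n)"
  by (simp add: lattice_vecs_def vecs_def level_form_def level_weight_def)

lemma pairing_level_form_reduce_emat:
  assumes j: "4 \<le> j" "j < n" and rc: "1 \<le> r" "r \<le> 3" "1 \<le> c" "c \<le> n"
  shows "pairing (reduced_dim n) (level_form n j) (reduce n (emat n r c)) = level_weight j r c"
proof (cases "kept_entry n r c")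
  case True
  then show ?thesis
    using rc entry_pos_kept[OF True] by (simp add: reduce_emat pairing_unit_vec level_form_def)
next
  case False
  then have "level_weight j r c = 0"
    using j by (auto simp: level_weight_def kept_entry_def shift_col_def)
  then show ?thesis using False rc by (simp add: reduce_emat pairing_def)
qed

lemma pairing_level_form_reduce_vertex:
  assumes "4 \<le> j" "j < n" "1 \<le> a" "a \<le> n" "1 \<le> b" "b \<le> n" "1 \<le> c" "c \<le> n"
  shows "pairing (reduced_dim n) (level_form n j) (reduce n (vertex n (a, b, c))) = triple_level j (a, b, c)"
proof -
  let ?L = "pairing (reduced_dim n) (level_form n j)"
  have "?L (reduce n (vertex n (a, b, c)))
      = ?L (reduce n (emat n 1 a)) + ?L (reduce n (emat n 2 b)) + ?L (reduce n (emat n 3 c))"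
    by (simp add: vertex_def linear_add[OF pairing_linear])
  also have "\<dots> = level_weight j 1 a + level_weight j 2 b + level_weight j 3 c"
    using assms by (simp add: pairing_level_form_reduce_emat)
  finally show ?thesis by (simp add: triple_level_def level_weight_def)
qed

lemma triple_level_eq:
  "triple_level j (a, b, c) = (if 3 \<le> a \<and> a < j then 1 else 0) - (if b = 2 \<or> 4 \<le> b \<and> b \<le> j then 1 else 0)"
  by (simp add: triple_level_def level_weight_def)

lemma triple_level_stage:
  assumes j: "4 \<le> j" and t: "(a, b, c) \<in> stage_triples n j"
  shows "triple_level j (a, b, c) \<in> {-1, 0, 1}"
    and "triple_level j (a, b, c) = 1 \<Longrightarrow> 3 \<le> a \<and> a < j \<and> (b = 1 \<and> a < c \<or> j < b \<and> b < c) \<and> c \<le> n"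
    and "triple_level j (a, b, c) = -1 \<longleftrightarrow> a = 2 \<and> b = j"
proof -
  have cases: "(a = 2 \<and> b = 1 \<and> 3 \<le> c \<and> c \<le> n) \<or> (3 \<le> a \<and> b = 1 \<and> a < c \<and> c \<le> n) \<or>
     (3 \<le> a \<and> a < j \<and> b = 2 \<and> a < c \<and> c \<le> n) \<or> (a = 2 \<and> 3 \<le> b \<and> j \<le> b \<and> b < c \<and> c \<le> n) \<or>
     (3 \<le> a \<and> a < b \<and> b < c \<and> c \<le> n)"
    using t by (simp add: stage_triples_def)
  show "triple_level j (a, b, c) \<in> {-1, 0, 1}" by (simp add: triple_level_eq)
  show "triple_level j (a, b, c) = 1 \<Longrightarrow> 3 \<le> a \<and> a < j \<and> (b = 1 \<and> a < c \<or> j < b \<and> b < c) \<and> c \<le> n"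
    using cases j by (auto simp: triple_level_eq split: if_splits)
  show "triple_level j (a, b, c) = -1 \<longleftrightarrow> a = 2 \<and> b = j"
    using cases j by (auto simp: triple_level_eq split: if_splits)
qed

lemma triple_level_stage_Suc:
  assumes j: "4 \<le> j" and t: "(a, b, c) \<in> stage_triples n (Suc j)"
  shows "triple_level j (a, b, c) \<in> {-1, 0, 1}"
    and "triple_level j (a, b, c) = 1 \<Longrightarrow> 3 \<le> a \<and> a < j \<and> (b = 1 \<and> a < c \<or> j < b \<and> b < c) \<and> c \<le> n"
    and "triple_level j (a, b, c) = -1 \<Longrightarrow> a = j \<and> b = 2"
proof -
  have cases: "(a = 2 \<and> b = 1 \<and> 3 \<le> c \<and> c \<le> n) \<or> (3 \<le> a \<and> b = 1 \<and> a < c \<and> c \<le> n) \<or>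
     (3 \<le> a \<and> a < Suc j \<and> b = 2 \<and> a < c \<and> c \<le> n) \<or> (a = 2 \<and> 3 \<le> b \<and> Suc j \<le> b \<and> b < c \<and> c \<le> n) \<or>
     (3 \<le> a \<and> a < b \<and> b < c \<and> c \<le> n)"
    using t by (simp add: stage_triples_def)
  show "triple_level j (a, b, c) \<in> {-1, 0, 1}" by (simp add: triple_level_eq)
  show "triple_level j (a, b, c) = 1 \<Longrightarrow> 3 \<le> a \<and> a < j \<and> (b = 1 \<and> a < c \<or> j < b \<and> b < c) \<and> c \<le> n"
    using cases j by (auto simp: triple_level_eq split: if_splits)
  show "triple_level j (a, b, c) = -1 \<Longrightarrow> a = j \<and> b = 2"
    using cases j by (auto simp: triple_level_eq split: if_splits)
qed

lemma vertex_exchange_forward: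
  assumes "3 \<le> a" "a < j" "b = 1 \<and> a < g \<or> j < b \<and> b < g" "g \<le> n" "j < c" "c \<le> n"
  shows "\<exists>x\<in>stage_triples n (Suc j). \<exists>y\<in>stage_triples n (Suc j).
    vertex n (a, b, g) + vertex n (2, j, c) = vertex n x + vertex n y"
proof (cases "b = 1")
  case True
  then have "vertex n (a, b, g) + vertex n (2, j, c) = vertex n (2, 1, g) + vertex n (a, j, c)"
    by (simp add: vertex_def algebra_simps)
  moreover have "(2, 1, g) \<in> stage_triples n (Suc j)" "(a, j, c) \<in> stage_triples n (Suc j)"
    using assms True by (auto simp: stage_triples_def)
  ultimately show ?thesis by blast
next
  case False
  then have "vertex n (a, b, g) + vertex n (2, j, c) = vertex n (a, j, c) + vertex n (2, b, g)"
    by (simp add: vertex_def algebra_simps)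
  moreover have "(a, j, c) \<in> stage_triples n (Suc j)" "(2, b, g) \<in> stage_triples n (Suc j)"
    using assms False by (auto simp: stage_triples_def)
  ultimately show ?thesis by blast
qed

lemma vertex_exchange_backward:
  assumes "3 \<le> a" "a < j" "b = 1 \<and> a < g \<or> j < b \<and> b < g" "g \<le> n" "j < c" "c \<le> n"
  shows "\<exists>x\<in>stage_triples n j. \<exists>y\<in>stage_triples n j.
    vertex n (a, b, g) + vertex n (j, 2, c) = vertex n x + vertex n y"
proof (cases "b = 1")
  case True
  then have "vertex n (a, b, g) + vertex n (j, 2, c) = vertex n (a, 2, g) + vertex n (j, 1, c)"
    by (simp add: vertex_def algebra_simps)
  moreover have "(a, 2, g) \<in> stage_triples n j" "(j, 1, c) \<in> stage_triples n j"
    using assms True by (auto simp: stage_triples_def)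
  ultimately show ?thesis by blast
next
  case False
  then have "vertex n (a, b, g) + vertex n (j, 2, c) = vertex n (a, 2, c) + vertex n (j, b, g)"
    by (simp add: vertex_def algebra_simps)
  moreover have "(a, 2, c) \<in> stage_triples n j" "(j, b, g) \<in> stage_triples n j"
    using assms False by (auto simp: stage_triples_def)
  ultimately show ?thesis by blast
qed

lemma pairing_level_form_reduce_stage:
  assumes j: "4 \<le> j" "j < n" and t: "t \<in> stage_triples n j \<union> stage_triples n (Suc j)"
  shows "pairing (reduced_dim n) (level_form n j) (reduce n (vertex n t)) = triple_level j t"
proof -
  obtain a b c where abc: "t = (a, b, c)" by (cases t)
  have "(a, b, c) \<in> stage_triples n j \<or> (a, b, c) \<in> stage_triples n (Suc j)" using t abc by simp
  then have "1 \<le> a \<and> a \<le> n \<and> 1 \<le> b \<and> b \<le> n \<and> 1 \<le> c \<and> c \<le> n"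
    by (auto dest!: stage_triples_range)
  then show ?thesis using j by (simp add: abc pairing_level_form_reduce_vertex)
qed

lemma reduce_flip_vec_at_entry:
  assumes "4 \<le> j" "j < n"
  shows "reduce n (flip_vec n j) (entry_pos n 1 j) = 1"
proof -
  have "kept_entry n 1 j" using assms by (simp add: kept_entry_def shift_col_def)
  then show ?thesis
    using assms by (simp add: reduce_at_entry_pos flip_vec_def emat_eq coord_eq_iff)
qed

lemma pairing_level_form_flip_vec:
  assumes "4 \<le> j" "j < n"
  shows "pairing (reduced_dim n) (level_form n j) (reduce n (flip_vec n j)) = 0"
  using assms
  by (simp add: flip_vec_def linear_add[OF pairing_linear] linear_diff[OF pairing_linear]
      pairing_level_form_reduce_emat) (simp add: level_weight_def)

lemma mutation_map_reduced_stage: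
  assumes j: "4 \<le> j" "j < n"
  shows "mutation_map (pairing (reduced_dim n) (level_form n j)) (reduce n (flip_vec n j)) ` reduced_stage n j
    = reduced_stage n (Suc j)"
proof -
  let ?\<phi> = "mutation_map (pairing (reduced_dim n) (level_form n j)) (reduce n (flip_vec n j))"
  have "?\<phi> (reduce n (vertex n t)) = reduce n (vertex n (flip_triple j t))" if t: "t \<in> stage_triples n j" for t
  proof -
    obtain a b c where abc: "t = (a, b, c)" by (cases t)
    have level: "triple_level j (a, b, c) \<in> {-1, 0, 1}" "triple_level j (a, b, c) = -1 \<longleftrightarrow> a = 2 \<and> b = j"
      using triple_level_stage[OF j(1)] t abc by auto
    have "?\<phi> (reduce n (vertex n t))
        = reduce n (vertex n t) - min 0 (triple_level j (a, b, c)) *\<^sub>R reduce n (flip_vec n j)"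
      using pairing_level_form_reduce_stage[OF j] t abc by (simp add: mutation_map_def)
    also have "\<dots> = reduce n (vertex n (flip_triple j t))"
    proof (cases "a = 2 \<and> b = j")
      case True
      then show ?thesis
        using level vertex_add_flip_vec[of n j c] by (simp add: abc flip_triple_def flip: reduce_add)
    next
      case False
      then show ?thesis using level by (auto simp: abc flip_triple_def)
    qed
    finally show ?thesis .
  qed
  then show ?thesis
    unfolding reduced_stage_def stage_triples_Suc[of j n, OF order.trans[OF _ j(1)], simplified] image_image
    by (simp cong: image_cong)
qed

lemma crossing_midpoints_reduced_stage:
  assumes j: "4 \<le> j" "j < n"
  defines "L \<equiv> pairing (reduced_dim n) (level_form n j)"
  shows "crossing_midpoints L (reduced_stage n j) \<subseteq> convex hull (reduced_stage n (Suc j))"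
    and "crossing_midpoints L (reduced_stage n (Suc j)) \<subseteq> convex hull (reduced_stage n j)"
proof -
  have level: "L (reduce n (vertex n t)) = triple_level j t"
    if "t \<in> stage_triples n j \<union> stage_triples n (Suc j)" for t
    using pairing_level_form_reduce_stage[OF j that] by (simp add: L_def)
  have exchange: "\<exists>x\<in>reduced_stage n i. \<exists>y\<in>reduced_stage n i. reduce n (vertex n s) + reduce n (vertex n t) = x + y"
    if "\<exists>x\<in>stage_triples n i. \<exists>y\<in>stage_triples n i. vertex n s + vertex n t = vertex n x + vertex n y" for s t i
    using that unfolding reduced_stage_def by (metis imageI reduce_add)
  show "crossing_midpoints L (reduced_stage n j) \<subseteq> convex hull (reduced_stage n (Suc j))"
  proof (rule crossing_midpoints_subset_convex_hull)
    fix p q assume "p \<in> reduced_stage n j" "q \<in> reduced_stage n j" "L p = 1" "L q = -1"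
    then obtain a b g c' d e where s: "(a, b, g) \<in> stage_triples n j" "p = reduce n (vertex n (a, b, g))"
      and t: "(c', d, e) \<in> stage_triples n j" "q = reduce n (vertex n (c', d, e))"
      and lv: "triple_level j (a, b, g) = 1" "triple_level j (c', d, e) = -1"
      unfolding reduced_stage_def using level by force
    have "c' = 2" "d = j" "j < e" "e \<le> n"
      using triple_level_stage(3)[OF j(1) t(1)] lv(2) t(1) by (auto simp: stage_triples_def)
    then have "\<exists>x\<in>stage_triples n (Suc j). \<exists>y\<in>stage_triples n (Suc j).
        vertex n (a, b, g) + vertex n (c', d, e) = vertex n x + vertex n y"
      using triple_level_stage(2)[OF j(1) s(1) lv(1)] vertex_exchange_forward[of a j b g n e] by simp
    then show "\<exists>x\<in>reduced_stage n (Suc j). \<exists>y\<in>reduced_stage n (Suc j). p + q = x + y"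
      unfolding s(2) t(2) by (rule exchange)
  qed
  show "crossing_midpoints L (reduced_stage n (Suc j)) \<subseteq> convex hull (reduced_stage n j)"
  proof (rule crossing_midpoints_subset_convex_hull)
    fix p q assume "p \<in> reduced_stage n (Suc j)" "q \<in> reduced_stage n (Suc j)" "L p = 1" "L q = -1"
    then obtain a b g c' d e where s: "(a, b, g) \<in> stage_triples n (Suc j)" "p = reduce n (vertex n (a, b, g))"
      and t: "(c', d, e) \<in> stage_triples n (Suc j)" "q = reduce n (vertex n (c', d, e))"
      and lv: "triple_level j (a, b, g) = 1" "triple_level j (c', d, e) = -1"
      unfolding reduced_stage_def using level by force
    have "c' = j" "d = 2" "j < e" "e \<le> n"
      using triple_level_stage_Suc(3)[OF j(1) t(1)] lv(2) t(1) by (auto simp: stage_triples_def)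
    then have "\<exists>x\<in>stage_triples n j. \<exists>y\<in>stage_triples n j.
        vertex n (a, b, g) + vertex n (c', d, e) = vertex n x + vertex n y"
      using triple_level_stage_Suc(2)[OF j(1) s(1) lv(1)] vertex_exchange_backward[of a j b g n e] by simp
    then show "\<exists>x\<in>reduced_stage n j. \<exists>y\<in>reduced_stage n j. p + q = x + y"
      unfolding s(2) t(2) by (rule exchange)
  qed
qed

lemma comb_mutation_reduced_stage:
  assumes j: "4 \<le> j" "j < n"
  shows "comb_mutation (reduced_dim n) (convex hull (reduced_stage n j)) (convex hull (reduced_stage n (Suc j)))"
proof -
  have vals: "\<forall>v\<in>reduced_stage n j. pairing (reduced_dim n) (level_form n j) v \<in> {-1, 0, 1}"
    using pairing_level_form_reduce_stage[OF j] triple_level_stage(1)[OF j(1)] by (force simp: reduced_stage_def)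
  have "0 \<in> reduced_stage n j"
    using stage_triples_nonempty[of n j] j reduce_vertex_origin[of n] unfolding reduced_stage_def by force
  moreover have "reduce n (flip_vec n j) \<in> lattice_vecs (reduced_dim n)"
    using j by (intro int_affine_map_lattice_vecs[OF reduce_int_affine_map] flip_vec_lattice_vecs) auto
  ultimately show ?thesis
    using comb_mutation_segmentI[OF _ reduced_stage_lattice_vecs _ level_form_lattice_vecs _
        reduce_flip_vec_at_entry[OF j] pairing_level_form_flip_vec[OF j] vals]
      crossing_midpoints_reduced_stage[OF j] mutation_map_reduced_stage[OF j]
      finite_stage_triples by (simp add: reduced_stage_def)
qed

lemma mutation_related_stage_Suc:
  assumes j: "4 \<le> j" "j < n"
  shows "mutation_related (3 * n, convex hull (vertex n ` stage_triples n j))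
    (3 * n, convex hull (vertex n ` stage_triples n (Suc j)))"
  unfolding mutation_related_def mutation_step_def fst_conv snd_conv
  using unimod_equiv_reduced_stage(1)[of j n] unimod_equiv_reduced_stage(2)[of "Suc j" n]
    spanned_lattice_reduced_stage[OF j] comb_mutation_reduced_stage[OF j] j by auto

lemma mutation_related_rtranclp_stages:
  assumes "4 \<le> n"
  shows "mutation_related\<^sup>*\<^sup>* (3 * n, convex hull (vertex n ` stage_triples n 4))
    (3 * n, convex hull (vertex n ` stage_triples n n))"
proof -
  have "mutation_related\<^sup>*\<^sup>* (3 * n, convex hull (vertex n ` stage_triples n 4))
      (3 * n, convex hull (vertex n ` stage_triples n j))" if "4 \<le> j" "j \<le> n" for j
    using that
  proof (induction j rule: dec_induct)
    case (step j)
    then show ?case using mutation_related_stage_Suc[of j n] by (simp add: rtranclp.rtrancl_into_rtrancl)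
  qed simp
  then show ?thesis using assms by simp
qed

theorem theorem3p5:
  fixes n :: nat
  assumes "n \<ge> 3"
  shows "mutation_sequence (3 * n) (mf_polytope n (block_diag 1)) (3 * n) (mf_polytope n (block_diag 2))"
proof -
  have "mutation_related\<^sup>*\<^sup>* (3 * n, convex hull (vertex n ` stage_triples n 3))
      (3 * n, convex hull (vertex n ` stage_triples n n))"
  proof (cases "n = 3")
    case False
    then have "4 \<le> n" using assms by simp
    then show ?thesis
      using mutation_related_if_unimod_equiv[OF unimod_equiv_stage_3_4] mutation_related_rtranclp_stages
      by (meson converse_rtranclp_into_rtranclp)
  qed simp
  moreover have "mutation_related (3 * n, convex hull (vertex n ` stage_triples n n))
      (3 * n, convex hull (vertex n ` flip_triple 1 ` stage_triples n n))"
    using mutation_related_if_unimod_equiv[OF unimod_equiv_flip_last_stage[OF assms]] .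
  ultimately show ?thesis
    unfolding mutation_sequence_def mf_polytope_block_diag block_triples_1 block_triples_2
    by (rule rtranclp.rtrancl_into_rtrancl)
qed

end
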